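(* Let $\Lambda$ be the double of a cellular decomposition of a compact oriented surface without boundary, with a discrete conformal structure $\rho$. For each pair of vertices $x,x'\in\Lambda_0$ joined by a simple path $\lambda$ in $\Lambda$ from $x$ to $x'$, there exists a unique pair of meromorphic $1$-forms $\alpha_{x,x'},\beta_{x,x'}$ on $\Lambda$ whose only poles are at $x$ and $x'$, with residues $+1$ at $x$ and $-1$ at $x'$, such that $\alpha_{x,x'}$ has purely imaginary holonomies and $\beta_{x,x'}$ has real holonomies along every loop in $\Lambda$ none of whose edges is dual to an edge of $\lambda$.
   Context: $\Lambda=\Gamma\sqcup\Gamma^*$ with $\Gamma$ a cellular decomposition and $\Gamma^*$ its Poincaré dual (dual edge $e^*$ for each edge $e$, dual face $v^*$ for each vertex $v$, $e^{**}=-e$); $\rho:\Lambda_1\to(0,\infty)$ with $\rho(e)\rho(e^* )=1$. Hodge star on 1-forms: $\int_e*\alpha=-\rho(e^* )\int_{e^*}\alpha$. A 1-form $\alpha$ is of type $(1,0)$ if $*\alpha=-i\alpha$. It is meromorphic with poles at a set of vertices if it is of type $(1,0)$, closed on every face $v^*$ of $\Lambda$ for $v$ not a pole, and not closed on $v^*$ for $v$ a pole; its residue at $v$ is $\mathrm{Res}_v(\alpha)=\frac{1}{2i\pi}\oint_{\partial v^*}\alpha$. The holonomy along a loop (closed edge-path) $\gamma$ is $\int_\gamma\alpha$. *)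

theory Defs
  imports Complex_Main
begin

text \<open>Combinatorial model of a cellular decomposition Gamma of a compact connected
oriented surface without boundary: a combinatorial map on a finite set D of darts
(oriented edges), with a fixed-point-free involution iota (edge reversal) and a
permutation sigma (counterclockwise rotation of darts around their tail vertex).
Vertices are sigma-orbits, faces are orbits of sigma o iota; the face of d is the
face lying to the right of d.\<close>

definition orb :: "('d \<Rightarrow> 'd) \<Rightarrow> 'd \<Rightarrow> 'd set" where
  "orb f d = {(f ^^ n) d | n. True}"

definition comb_map :: "'d set \<Rightarrow> ('d \<Rightarrow> 'd) \<Rightarrow> ('d \<Rightarrow> 'd) \<Rightarrow> bool" where
  "comb_map D \<sigma> \<iota> \<longleftrightarrow> finite D \<and> D \<noteq> {} \<and> bij_betw \<sigma> D D \<and> bij_betw \<iota> D D \<and>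
     (\<forall>d\<in>D. \<iota> (\<iota> d) = d \<and> \<iota> d \<noteq> d) \<and>
     (\<forall>d\<in>D. \<forall>d'\<in>D. (d, d') \<in> {(a, b). b = \<sigma> a \<or> b = \<iota> a}\<^sup>*)"

text \<open>Oriented edges of the double Lambda = Gamma + Gamma*: a primal dart, or the
dual dart d* of a primal dart d, which crosses d from its right to its left.\<close>

datatype 'd ldart = Prim 'd | Dual 'd

definition ldarts :: "'d set \<Rightarrow> 'd ldart set" where
  "ldarts D = Prim ` D \<union> Dual ` D"

text \<open>Vertices of Lambda: Inl v for vertices of Gamma, Inr f for faces of Gamma
(= vertices of Gamma*).\<close>

definition lverts :: "'d set \<Rightarrow> ('d \<Rightarrow> 'd) \<Rightarrow> ('d \<Rightarrow> 'd) \<Rightarrow> ('d set + 'd set) set" where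
  "lverts D \<sigma> \<iota> = (\<lambda>d. Inl (orb \<sigma> d)) ` D \<union> (\<lambda>d. Inr (orb (\<sigma> \<circ> \<iota>) d)) ` D"

fun lrev :: "('d \<Rightarrow> 'd) \<Rightarrow> 'd ldart \<Rightarrow> 'd ldart" where
  "lrev \<iota> (Prim d) = Prim (\<iota> d)"
| "lrev \<iota> (Dual d) = Dual (\<iota> d)"

text \<open>Duality on oriented edges: e \<mapsto> e*, with e** = -e.\<close>

fun lstar :: "('d \<Rightarrow> 'd) \<Rightarrow> 'd ldart \<Rightarrow> 'd ldart" where
  "lstar \<iota> (Prim d) = Dual d"
| "lstar \<iota> (Dual d) = Prim (\<iota> d)"

fun ltail :: "('d \<Rightarrow> 'd) \<Rightarrow> ('d \<Rightarrow> 'd) \<Rightarrow> 'd ldart \<Rightarrow> 'd set + 'd set" where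
  "ltail \<sigma> \<iota> (Prim d) = Inl (orb \<sigma> d)"
| "ltail \<sigma> \<iota> (Dual d) = Inr (orb (\<sigma> \<circ> \<iota>) d)"

definition lhead :: "('d \<Rightarrow> 'd) \<Rightarrow> ('d \<Rightarrow> 'd) \<Rightarrow> 'd ldart \<Rightarrow> 'd set + 'd set" where
  "lhead \<sigma> \<iota> x = ltail \<sigma> \<iota> (lrev \<iota> x)"

definition conf_struct :: "'d set \<Rightarrow> ('d \<Rightarrow> 'd) \<Rightarrow> ('d ldart \<Rightarrow> real) \<Rightarrow> bool" where
  "conf_struct D \<iota> \<rho> \<longleftrightarrow> (\<forall>x\<in>ldarts D. \<rho> x > 0 \<and> \<rho> (lrev \<iota> x) = \<rho> x \<and>
      \<rho> x * \<rho> (lstar \<iota> x) = 1)"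

text \<open>1-forms: antisymmetric complex functions on oriented edges of Lambda
(value 0 off the carrier, for extensionality).\<close>

definition one_form :: "'d set \<Rightarrow> ('d \<Rightarrow> 'd) \<Rightarrow> ('d ldart \<Rightarrow> complex) \<Rightarrow> bool" where
  "one_form D \<iota> \<alpha> \<longleftrightarrow> (\<forall>x\<in>ldarts D. \<alpha> (lrev \<iota> x) = - \<alpha> x) \<and> (\<forall>x. x \<notin> ldarts D \<longrightarrow> \<alpha> x = 0)"

definition hodge :: "('d \<Rightarrow> 'd) \<Rightarrow> ('d ldart \<Rightarrow> real) \<Rightarrow> ('d ldart \<Rightarrow> complex) \<Rightarrow> 'd ldart \<Rightarrow> complex" where
  "hodge \<iota> \<rho> \<alpha> x = - complex_of_real (\<rho> (lstar \<iota> x)) * \<alpha> (lstar \<iota> x)"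

definition type10 :: "'d set \<Rightarrow> ('d \<Rightarrow> 'd) \<Rightarrow> ('d ldart \<Rightarrow> real) \<Rightarrow> ('d ldart \<Rightarrow> complex) \<Rightarrow> bool" where
  "type10 D \<iota> \<rho> \<alpha> \<longleftrightarrow> (\<forall>x\<in>ldarts D. hodge \<iota> \<rho> \<alpha> x = - \<i> * \<alpha> x)"

text \<open>Integral of alpha over the positively oriented boundary of the face u* of Lambda
dual to the vertex u: sum of alpha(e*) over the oriented edges e of Lambda leaving u.\<close>

definition face_int :: "'d set \<Rightarrow> ('d \<Rightarrow> 'd) \<Rightarrow> ('d \<Rightarrow> 'd) \<Rightarrow> ('d ldart \<Rightarrow> complex)
     \<Rightarrow> 'd set + 'd set \<Rightarrow> complex" where
  "face_int D \<sigma> \<iota> \<alpha> u = (\<Sum>x\<in>{x\<in>ldarts D. ltail \<sigma> \<iota> x = u}. \<alpha> (lstar \<iota> x))"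

definition residue :: "'d set \<Rightarrow> ('d \<Rightarrow> 'd) \<Rightarrow> ('d \<Rightarrow> 'd) \<Rightarrow> ('d ldart \<Rightarrow> complex)
     \<Rightarrow> 'd set + 'd set \<Rightarrow> complex" where
  "residue D \<sigma> \<iota> \<alpha> u = face_int D \<sigma> \<iota> \<alpha> u / (2 * \<i> * complex_of_real pi)"

definition meromorphic :: "'d set \<Rightarrow> ('d \<Rightarrow> 'd) \<Rightarrow> ('d \<Rightarrow> 'd) \<Rightarrow> ('d ldart \<Rightarrow> real)
     \<Rightarrow> ('d set + 'd set) set \<Rightarrow> ('d ldart \<Rightarrow> complex) \<Rightarrow> bool" where
  "meromorphic D \<sigma> \<iota> \<rho> P \<alpha> \<longleftrightarrow> one_form D \<iota> \<alpha> \<and> type10 D \<iota> \<rho> \<alpha> \<and>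
     (\<forall>u\<in>lverts D \<sigma> \<iota> - P. face_int D \<sigma> \<iota> \<alpha> u = 0) \<and>
     (\<forall>u\<in>P. face_int D \<sigma> \<iota> \<alpha> u \<noteq> 0)"

fun is_chain :: "('d \<Rightarrow> 'd) \<Rightarrow> ('d \<Rightarrow> 'd) \<Rightarrow> 'd ldart list \<Rightarrow> bool" where
  "is_chain \<sigma> \<iota> [] = True"
| "is_chain \<sigma> \<iota> [y] = True"
| "is_chain \<sigma> \<iota> (y # z # zs) = (lhead \<sigma> \<iota> y = ltail \<sigma> \<iota> z \<and> is_chain \<sigma> \<iota> (z # zs))"

definition is_path :: "'d set \<Rightarrow> ('d \<Rightarrow> 'd) \<Rightarrow> ('d \<Rightarrow> 'd) \<Rightarrow> 'd ldart list
     \<Rightarrow> 'd set + 'd set \<Rightarrow> 'd set + 'd set \<Rightarrow> bool" where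
  "is_path D \<sigma> \<iota> xs u v \<longleftrightarrow> xs \<noteq> [] \<and> set xs \<subseteq> ldarts D \<and> is_chain \<sigma> \<iota> xs \<and>
     ltail \<sigma> \<iota> (hd xs) = u \<and> lhead \<sigma> \<iota> (last xs) = v"

definition simple_path :: "'d set \<Rightarrow> ('d \<Rightarrow> 'd) \<Rightarrow> ('d \<Rightarrow> 'd) \<Rightarrow> 'd ldart list
     \<Rightarrow> 'd set + 'd set \<Rightarrow> 'd set + 'd set \<Rightarrow> bool" where
  "simple_path D \<sigma> \<iota> xs u v \<longleftrightarrow> is_path D \<sigma> \<iota> xs u v \<and>
     distinct (map (ltail \<sigma> \<iota>) xs @ [v])"

definition is_loop :: "'d set \<Rightarrow> ('d \<Rightarrow> 'd) \<Rightarrow> ('d \<Rightarrow> 'd) \<Rightarrow> 'd ldart list \<Rightarrow> bool" where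
  "is_loop D \<sigma> \<iota> xs \<longleftrightarrow> (\<exists>u. is_path D \<sigma> \<iota> xs u u)"

definition holonomy :: "('d ldart \<Rightarrow> complex) \<Rightarrow> 'd ldart list \<Rightarrow> complex" where
  "holonomy \<alpha> xs = sum_list (map \<alpha> xs)"

definition avoids_dual :: "('d \<Rightarrow> 'd) \<Rightarrow> 'd ldart list \<Rightarrow> 'd ldart list \<Rightarrow> bool" where
  "avoids_dual \<iota> \<gamma> lam \<longleftrightarrow>
     (\<forall>y\<in>set \<gamma>. \<forall>z\<in>set lam. y \<noteq> lstar \<iota> z \<and> y \<noteq> lrev \<iota> (lstar \<iota> z))"

end

theory Submission
  imports Defs
begin

text \<open>A (1,0)-form on the double is determined by its values a on primal edges, its value on the
dual edge e* being i rho(e) a(e). Closedness around the faces of the double says that rho a has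
prescribed divergence at the vertices of Gamma (the residues) and that a has zero circulation
around the faces of Gamma.

For a pole pair of primal vertices, alpha is obtained from the solution f of the Laplace equation
on Gamma with source 2 pi (delta x - delta x') by taking a = df: its real part is exact, so all
its periods are imaginary. For beta one takes a = (dg + 2 pi J) / rho, where J is the indicator
of the path lam and g solves a Laplace equation on Gamma* that makes a closed around the faces;
its imaginary part is exact off lam*.

Uniqueness: the difference of two solutions is holomorphic and (after multiplying by i in the
case of beta) has vanishing real periods off lam*. Its real part is then an exact harmonic
cocycle on Gamma, and on Gamma* it is exact up to a divergence-free flow supported on the simple
path lam, which must vanish. A Dirichlet energy argument kills both parts.

Poles at faces are reduced to poles at vertices by exchanging Gamma and Gamma*.\<close>

section \<open>Orbits and combinatorial maps\<close>

lemma funpow_period: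
  assumes "finite D" "bij_betw f D D" "d \<in> D"
  obtains p where "p > 0" "(f ^^ p) d = d"
proof -
  have "\<not> inj (\<lambda>n. (f ^^ n) d)"
  proof
    assume "inj (\<lambda>n. (f ^^ n) d)"
    moreover have "range (\<lambda>n. (f ^^ n) d) \<subseteq> D"
      using bij_betw_apply[OF bij_betw_funpow[OF assms(2)] assms(3)] by auto
    ultimately show False
      using assms(1) finite_imageD finite_subset infinite_UNIV_nat by metis
  qed
  then obtain i j where ij: "i < j" "(f ^^ i) d = (f ^^ j) d"
    unfolding inj_def by (metis linorder_neqE_nat)
  have "(f ^^ i) ((f ^^ (j - i)) d) = (f ^^ i) d"
    using ij by (metis add_diff_inverse_nat funpow_add less_imp_not_less o_apply)
  moreover have "(f ^^ (j - i)) d \<in> D"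
    using bij_betw_apply[OF bij_betw_funpow[OF assms(2)] assms(3)] .
  ultimately have "(f ^^ (j - i)) d = d"
    using bij_betw_imp_inj_on[OF bij_betw_funpow[OF assms(2)]] assms(3) by (auto dest: inj_onD)
  then show thesis using that[of "j - i"] ij(1) by simp
qed

lemma orb_apply:
  assumes "finite D" "bij_betw f D D" "d \<in> D"
  shows "orb f (f d) = orb f d"
proof -
  obtain p where p: "p > 0" "(f ^^ p) d = d" using funpow_period[OF assms] .
  have shift: "(f ^^ n) (f d) = (f ^^ Suc n) d" for n
    by (metis comp_apply funpow_Suc_right)
  have "(f ^^ n) d = (f ^^ (n + p)) d" for n
    using p by (simp add: funpow_add)
  then have "(f ^^ n) d = (f ^^ (n + p - 1)) (f d)" for n
    using p(1) shift by (metis Suc_diff_1 add_gr_0)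
  then show ?thesis
    unfolding orb_def using shift by blast
qed

lemma orb_cong_on:
  assumes "\<forall>d\<in>D. f d = g d" "g ` D \<subseteq> D" "d \<in> D"
  shows "orb f d = orb g d"
proof -
  have "(f ^^ n) d = (g ^^ n) d \<and> (g ^^ n) d \<in> D" for n
    by (induction n) (use assms in auto)
  then show ?thesis unfolding orb_def by simp
qed

definition dart_link :: "'d set \<Rightarrow> ('d \<Rightarrow> 'd) \<Rightarrow> ('d \<Rightarrow> 'v) \<Rightarrow> ('d \<times> 'd) set" where
  "dart_link D \<iota> \<pi> = {(a, b). a \<in> D \<and> b \<in> D \<and> (\<pi> a = \<pi> b \<or> b = \<iota> a)}"

locale combinatorial_map =
  fixes D :: "'d set" and \<sigma> \<iota> :: "'d \<Rightarrow> 'd"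
  assumes comb_map: "comb_map D \<sigma> \<iota>"
begin

lemma finite_darts: "finite D"
  using comb_map by (simp add: comb_map_def)

lemma bij_sigma: "bij_betw \<sigma> D D"
  using comb_map by (simp add: comb_map_def)

lemma bij_iota: "bij_betw \<iota> D D"
  using comb_map by (simp add: comb_map_def)

lemma iota_iota [simp]: "d \<in> D \<Longrightarrow> \<iota> (\<iota> d) = d"
  and iota_neq: "d \<in> D \<Longrightarrow> \<iota> d \<noteq> d"
  using comb_map unfolding comb_map_def bij_betw_def by auto

lemma darts_nonempty: "D \<noteq> {}"
  using comb_map by (simp add: comb_map_def)

lemma darts_connected: "d \<in> D \<Longrightarrow> d' \<in> D \<Longrightarrow> (d, d') \<in> {(a, b). b = \<sigma> a \<or> b = \<iota> a}\<^sup>*"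
  using comb_map unfolding comb_map_def by (elim conjE) fast

lemma bij_sigma_iota: "bij_betw (\<sigma> \<circ> \<iota>) D D"
  by (rule bij_betw_trans[OF bij_iota bij_sigma])

lemma sigma_in: "d \<in> D \<Longrightarrow> \<sigma> d \<in> D"
  by (rule bij_betw_apply[OF bij_sigma])

lemma iota_in: "d \<in> D \<Longrightarrow> \<iota> d \<in> D"
  by (rule bij_betw_apply[OF bij_iota])

lemma orb_sigma_apply: "d \<in> D \<Longrightarrow> orb \<sigma> (\<sigma> d) = orb \<sigma> d"
  by (rule orb_apply[OF finite_darts bij_sigma])

lemma orb_face_apply: "d \<in> D \<Longrightarrow> orb (\<sigma> \<circ> \<iota>) (\<sigma> (\<iota> d)) = orb (\<sigma> \<circ> \<iota>) d"
  using orb_apply[OF finite_darts bij_sigma_iota, of d] by simp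

lemma orb_face_iota: "d \<in> D \<Longrightarrow> orb (\<sigma> \<circ> \<iota>) (\<iota> d) = orb (\<sigma> \<circ> \<iota>) (\<sigma> d)"
  using orb_face_apply[OF iota_in, of d] by simp

lemma dart_link_connected:
  assumes "\<And>d. d \<in> D \<Longrightarrow> (d, \<sigma> d) \<in> (dart_link D \<iota> \<pi>)\<^sup>*"
  shows "\<forall>d\<in>D. \<forall>d'\<in>D. (d, d') \<in> (dart_link D \<iota> \<pi>)\<^sup>*"
proof (intro ballI)
  fix d d' assume d: "d \<in> D" "d' \<in> D"
  have "(d, d') \<in> {(a, b). b = \<sigma> a \<or> b = \<iota> a}\<^sup>*"
    using d by (rule darts_connected)
  then have "(d, d') \<in> (dart_link D \<iota> \<pi>)\<^sup>* \<and> d' \<in> D"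
  proof (induction rule: rtrancl_induct)
    case (step y z)
    then have y: "(d, y) \<in> (dart_link D \<iota> \<pi>)\<^sup>*" "y \<in> D" by auto
    from step(2) consider "z = \<sigma> y" | "z = \<iota> y" by blast
    then show ?case
    proof cases
      case 1
      then show ?thesis using y assms[OF y(2)] sigma_in[OF y(2)] by (blast intro: rtrancl_trans)
    next
      case 2
      then have "(y, z) \<in> dart_link D \<iota> \<pi>" using y(2) iota_in by (simp add: dart_link_def)
      then show ?thesis using y iota_in[OF y(2)] 2 by (blast intro: rtrancl_into_rtrancl)
    qed
  qed (use d in simp)
  then show "(d, d') \<in> (dart_link D \<iota> \<pi>)\<^sup>*" by blast
qed

lemma vertex_link_connected: "\<forall>d\<in>D. \<forall>d'\<in>D. (d, d') \<in> (dart_link D \<iota> (orb \<sigma>))\<^sup>*"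
proof (rule dart_link_connected)
  fix d assume "d \<in> D"
  then have "(d, \<sigma> d) \<in> dart_link D \<iota> (orb \<sigma>)"
    using orb_sigma_apply sigma_in by (simp add: dart_link_def)
  then show "(d, \<sigma> d) \<in> (dart_link D \<iota> (orb \<sigma>))\<^sup>*" ..
qed

lemma face_link_connected: "\<forall>d\<in>D. \<forall>d'\<in>D. (d, d') \<in> (dart_link D \<iota> (orb (\<sigma> \<circ> \<iota>)))\<^sup>*"
proof (rule dart_link_connected)
  fix d assume d: "d \<in> D"
  have "(d, \<iota> d) \<in> dart_link D \<iota> (orb (\<sigma> \<circ> \<iota>))" "(\<iota> d, \<sigma> d) \<in> dart_link D \<iota> (orb (\<sigma> \<circ> \<iota>))"
    using d iota_in sigma_in orb_face_iota by (simp_all add: dart_link_def)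
  then show "(d, \<sigma> d) \<in> (dart_link D \<iota> (orb (\<sigma> \<circ> \<iota>)))\<^sup>*"
    by (blast intro: r_into_rtrancl rtrancl_into_rtrancl)
qed

end

section \<open>Laplacians on weighted graphs\<close>

definition conductance_graph :: "'v set \<Rightarrow> ('v \<Rightarrow> 'v \<Rightarrow> real) \<Rightarrow> ('v \<times> 'v) set" where
  "conductance_graph V C = {(a, b). a \<in> V \<and> b \<in> V \<and> 0 < C a b}"

lemma conductance_graph_leave:
  assumes "(w, u) \<in> (conductance_graph V C)\<^sup>*" "u \<noteq> w"
  obtains b where "b \<in> V" "b \<noteq> w" "C w b > 0"
proof -
  have "\<exists>b\<in>V. b \<noteq> w \<and> C w b > 0" if "(a, u) \<in> (conductance_graph V C)\<^sup>*" "a = w" for a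
    using that assms(2)
  proof (induction rule: converse_rtrancl_induct)
    case (step y z)
    then show ?case by (cases "z = w") (auto simp: conductance_graph_def)
  qed simp
  then show thesis using assms(1) that by blast
qed

lemma kron_reduction_connected:
  assumes nonneg: "\<forall>u\<in>V. \<forall>v\<in>V. 0 \<le> C u v" and K: "K > 0" and w: "w \<in> V"
    and path: "(a, v) \<in> (conductance_graph V C)\<^sup>*" and v: "v \<in> V - {w}" and a: "a \<noteq> w"
  shows "(a, v) \<in> (conductance_graph (V - {w}) (\<lambda>u v. C u v + C u w * C w v / K))\<^sup>*"
proof -
  let ?R = "conductance_graph (V - {w}) (\<lambda>u v. C u v + C u w * C w v / K)"
  have larger: "C u v \<le> C u v + C u w * C w v / K" if "u \<in> V" "v \<in> V" for u v
    using nonneg that w K by simp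
  \<comment> \<open>A path through the eliminated vertex w is shortcut by the new conductance C u w * C w v / K.\<close>
  have "(a \<noteq> w \<longrightarrow> (a, v) \<in> ?R\<^sup>*) \<and> (a = w \<longrightarrow> (\<exists>u\<in>V - {w}. C w u > 0 \<and> (u, v) \<in> ?R\<^sup>*))"
    using path
  proof (induction rule: converse_rtrancl_induct)
    case base
    then show ?case using v by auto
  next
    case (step y z)
    then have yz: "y \<in> V" "z \<in> V" "C y z > 0" by (auto simp: conductance_graph_def)
    consider "y = w" | "y \<noteq> w" "z = w" | "y \<noteq> w" "z \<noteq> w" by blast
    then show ?case
    proof cases
      case 1
      then show ?thesis using step.IH yz by (cases "z = w") auto
    next
      case 2
      then obtain u where u: "u \<in> V - {w}" "C w u > 0" "(u, v) \<in> ?R\<^sup>*" using step.IH by blast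
      have "0 < C y u + C y w * C w u / K"
        using nonneg yz u 2 K by (simp add: add_nonneg_pos)
      then have "(y, u) \<in> ?R" using 2 yz u by (simp add: conductance_graph_def)
      then show ?thesis using u(3) 2 by (simp add: converse_rtrancl_into_rtrancl)
    next
      case 3
      then have "(y, z) \<in> ?R" using larger[OF yz(1,2)] yz by (simp add: conductance_graph_def)
      then show ?thesis using step.IH 3 by (simp add: converse_rtrancl_into_rtrancl)
    qed
  qed
  then show ?thesis using a by blast
qed

lemma kron_reduction_lift:
  fixes C :: "'v \<Rightarrow> 'v \<Rightarrow> real"
  assumes fin: "finite V" and w: "w \<in> V" and K: "K = (\<Sum>v\<in>V - {w}. C w v)" "K > 0"
    and reduced: "\<forall>u\<in>V - {w}.
      (\<Sum>v\<in>V - {w}. (C u v + C u w * C w v / K) * (f v - f u)) = s u + C u w * s w / K"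
    and fw: "f w = ((\<Sum>v\<in>V - {w}. C w v * f v) - s w) / K"
  shows "\<forall>u\<in>V. (\<Sum>v\<in>V. C u v * (f v - f u)) = s u"
proof
  fix u assume u: "u \<in> V"
  have split: "(\<Sum>v\<in>V. C u v * (f v - f u)) = C u w * (f w - f u) + (\<Sum>v\<in>V - {w}. C u v * (f v - f u))"
    using fin w by (simp add: sum.remove)
  have toward_w: "(\<Sum>v\<in>V - {w}. C w v * (f v - f x)) = (\<Sum>v\<in>V - {w}. C w v * f v) - K * f x" for x
    unfolding K by (simp add: algebra_simps sum_subtractf sum_distrib_left)
  show "(\<Sum>v\<in>V. C u v * (f v - f u)) = s u"
  proof (cases "u = w")
    case True
    then show ?thesis using split toward_w[of w] fw K(2) by simp
  next
    case False
    have "(\<Sum>v\<in>V - {w}. (C u v + C u w * C w v / K) * (f v - f u))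
        = (\<Sum>v\<in>V - {w}. C u v * (f v - f u)) + C u w / K * (\<Sum>v\<in>V - {w}. C w v * (f v - f u))"
      by (simp add: sum_distrib_left flip: sum.distrib) (rule sum.cong; simp add: algebra_simps)
    then have "(\<Sum>v\<in>V - {w}. C u v * (f v - f u))
        = s u + C u w * s w / K - C u w / K * ((\<Sum>v\<in>V - {w}. C w v * f v) - K * f u)"
      using reduced u False toward_w[of u] by simp
    moreover have "C u w * (f w - f u)
        = C u w / K * ((\<Sum>v\<in>V - {w}. C w v * f v) - K * f u) - C u w * s w / K"
      unfolding fw using K(2) by (simp add: field_simps)
    ultimately show ?thesis using split by simp
  qed
qed

lemma sum_conductance_from_pos:
  assumes "finite V" "\<forall>u\<in>V. \<forall>v\<in>V. 0 \<le> C u v" "\<forall>u\<in>V. \<forall>v\<in>V. (u, v) \<in> (conductance_graph V C)\<^sup>*"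
    and "w \<in> V" "u \<in> V" "u \<noteq> w"
  shows "0 < (\<Sum>v\<in>V - {w}. C w v)"
proof -
  have "(w, u) \<in> (conductance_graph V C)\<^sup>*" using assms(3-5) by blast
  then obtain b where b: "b \<in> V" "b \<noteq> w" "C w b > 0"
    using assms(6) by (rule conductance_graph_leave)
  have "C w b \<le> (\<Sum>v\<in>V - {w}. C w v)"
    using assms(1,2,4) b by (intro member_le_sum) auto
  then show ?thesis using b by simp
qed

lemma kron_reduction_network:
  fixes C :: "'v \<Rightarrow> 'v \<Rightarrow> real"
  assumes fin: "finite V" and sym: "\<forall>u\<in>V. \<forall>v\<in>V. C u v = C v u"
    and nonneg: "\<forall>u\<in>V. \<forall>v\<in>V. 0 \<le> C u v"
    and conn: "\<forall>u\<in>V. \<forall>v\<in>V. (u, v) \<in> (conductance_graph V C)\<^sup>*"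
    and w: "w \<in> V" and K: "K = (\<Sum>v\<in>V - {w}. C w v)" "K > 0"
  defines "C' \<equiv> \<lambda>u v. C u v + C u w * C w v / K"
  shows "\<forall>u\<in>V - {w}. \<forall>v\<in>V - {w}. C' u v = C' v u"
    and "\<forall>u\<in>V - {w}. \<forall>v\<in>V - {w}. 0 \<le> C' u v"
    and "\<forall>u\<in>V - {w}. \<forall>v\<in>V - {w}. (u, v) \<in> (conductance_graph (V - {w}) C')\<^sup>*"
    and "(\<Sum>u\<in>V - {w}. s u + C u w * s w / K) = (\<Sum>u\<in>V. s u)"
proof -
  show "\<forall>u\<in>V - {w}. \<forall>v\<in>V - {w}. C' u v = C' v u"
    using sym w unfolding C'_def by (simp add: mult.commute)
  show "\<forall>u\<in>V - {w}. \<forall>v\<in>V - {w}. 0 \<le> C' u v"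
    using nonneg w K unfolding C'_def by simp
  show "\<forall>u\<in>V - {w}. \<forall>v\<in>V - {w}. (u, v) \<in> (conductance_graph (V - {w}) C')\<^sup>*"
    using kron_reduction_connected[OF nonneg K(2) w] conn unfolding C'_def by blast
  have "(\<Sum>u\<in>V - {w}. C u w) = K"
    unfolding K using sym w by (intro sum.cong) auto
  then have "(\<Sum>u\<in>V - {w}. s u + C u w * s w / K) = (\<Sum>u\<in>V - {w}. s u) + s w"
    using K by (simp add: sum.distrib flip: sum_divide_distrib sum_distrib_right)
  also have "\<dots> = (\<Sum>u\<in>V. s u)"
    using fin w by (simp add: sum.remove)
  finally show "(\<Sum>u\<in>V - {w}. s u + C u w * s w / K) = (\<Sum>u\<in>V. s u)" .
qed

text \<open>Eliminate one vertex at a time (Kron reduction): the reduced network is again symmetric,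
nonnegative and connected, and its solutions lift.\<close>

lemma laplacian_solvable:
  fixes C :: "'v \<Rightarrow> 'v \<Rightarrow> real"
  assumes "finite V"
    and "\<forall>u\<in>V. \<forall>v\<in>V. C u v = C v u"
    and "\<forall>u\<in>V. \<forall>v\<in>V. 0 \<le> C u v"
    and "\<forall>u\<in>V. \<forall>v\<in>V. (u, v) \<in> (conductance_graph V C)\<^sup>*"
    and "(\<Sum>u\<in>V. s u) = 0"
  shows "\<exists>f. \<forall>u\<in>V. (\<Sum>v\<in>V. C u v * (f v - f u)) = s u"
  using assms
proof (induction "card V" arbitrary: V C s)
  case (Suc n)
  obtain w where w: "w \<in> V" using Suc.hyps(2) card_gt_0_iff by fastforce
  show ?case
  proof (cases "V - {w} = {}")
    case True
    then have "V = {w}" using w by blast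
    then show ?thesis using Suc.prems(5) by simp
  next
    case False
    define K where "K = (\<Sum>v\<in>V - {w}. C w v)"
    have K: "K > 0"
      using False sum_conductance_from_pos[OF Suc.prems(1,3,4) w] unfolding K_def by blast
    note reduced = kron_reduction_network[OF Suc.prems(1-4) w K_def K]
    obtain f where f: "\<forall>u\<in>V - {w}. (\<Sum>v\<in>V - {w}. (C u v + C u w * C w v / K) * (f v - f u))
        = s u + C u w * s w / K"
    proof -
      have "card (V - {w}) = n" "finite (V - {w})" using Suc.hyps(2) Suc.prems(1) w by simp_all
      then show thesis
        using Suc.hyps(1)[of "V - {w}" _ "\<lambda>u. s u + C u w * s w / K", OF _ _ reduced(1-3)]
          reduced(4)[of s] Suc.prems(5) that by auto
    qed
    define f' where "f' = f(w := ((\<Sum>v\<in>V - {w}. C w v * f v) - s w) / K)"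
    have "\<forall>u\<in>V - {w}. (\<Sum>v\<in>V - {w}. (C u v + C u w * C w v / K) * (f' v - f' u))
        = s u + C u w * s w / K"
      using f unfolding f'_def by simp
    moreover have "f' w = ((\<Sum>v\<in>V - {w}. C w v * f' v) - s w) / K"
      unfolding f'_def by simp
    ultimately show ?thesis
      using kron_reduction_lift[where C = C, OF Suc.prems(1) w K_def K, of f' s] by blast
  qed
qed simp

lemma sum_fiber_reindex:
  assumes "bij_betw g D D" "\<forall>d\<in>D. \<pi> (g d) = \<pi> d"
  shows "(\<Sum>d\<in>{d\<in>D. \<pi> d = v}. h (g d)) = (\<Sum>d\<in>{d\<in>D. \<pi> d = v}. h d)"
proof -
  have "bij_betw g {d\<in>D. \<pi> d = v} {d\<in>D. \<pi> d = v}"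
    using assms by (auto simp: bij_betw_def inj_on_def image_iff) (metis imageE)
  then show ?thesis by (rule sum.reindex_bij_betw)
qed

lemma sum_involution_reindex:
  assumes "\<forall>d\<in>D. \<iota> d \<in> D \<and> \<iota> (\<iota> d) = d"
  shows "(\<Sum>d\<in>D. h (\<iota> d)) = (\<Sum>d\<in>D. h d)"
  by (rule sum.reindex_bij_witness[of D \<iota> \<iota>]) (use assms in auto)

text \<open>The Dirichlet energy of f is minus the pairing of f with its Laplacian, so a harmonic f has
zero energy.\<close>

lemma harmonic_edge_constant:
  fixes c :: "'d \<Rightarrow> real" and \<pi> :: "'d \<Rightarrow> 'v" and f :: "'v \<Rightarrow> real"
  assumes fin: "finite D" and inv: "\<forall>d\<in>D. \<iota> d \<in> D \<and> \<iota> (\<iota> d) = d"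
    and c: "\<forall>d\<in>D. c d > 0 \<and> c (\<iota> d) = c d"
    and harmonic: "\<forall>d\<in>D. (\<Sum>d'\<in>{d'\<in>D. \<pi> d' = \<pi> d}. c d' * (f (\<pi> (\<iota> d')) - f (\<pi> d'))) = 0"
  shows "\<forall>d\<in>D. f (\<pi> (\<iota> d)) = f (\<pi> d)"
proof -
  define h where "h d = f (\<pi> d) * (c d * (f (\<pi> (\<iota> d)) - f (\<pi> d)))" for d
  have "(\<Sum>d\<in>D. h d) = (\<Sum>v\<in>\<pi> ` D. \<Sum>d\<in>{d\<in>D. \<pi> d = v}. h d)"
    by (rule sum.group[symmetric]) (use fin in auto)
  also have "\<dots> = (\<Sum>v\<in>\<pi> ` D. f v * (\<Sum>d\<in>{d\<in>D. \<pi> d = v}. c d * (f (\<pi> (\<iota> d)) - f (\<pi> d))))"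
    unfolding h_def by (auto simp: sum_distrib_left intro!: sum.cong)
  also have "\<dots> = 0"
    using harmonic by (intro sum.neutral) auto
  finally have "(\<Sum>d\<in>D. h d + h (\<iota> d)) = 0"
    using sum_involution_reindex[OF inv, of h] by (simp add: sum.distrib)
  moreover have "h d + h (\<iota> d) = - (c d * (f (\<pi> (\<iota> d)) - f (\<pi> d))\<^sup>2)" if "d \<in> D" for d
    using inv c that unfolding h_def power2_eq_square by (simp add: algebra_simps)
  ultimately have "(\<Sum>d\<in>D. c d * (f (\<pi> (\<iota> d)) - f (\<pi> d))\<^sup>2) = 0"
    by (simp add: sum_negf)
  then have "\<forall>d\<in>D. c d * (f (\<pi> (\<iota> d)) - f (\<pi> d))\<^sup>2 = 0"
    using c by (subst (asm) sum_nonneg_eq_0_iff[OF fin]) (auto intro: less_imp_le)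
  then show ?thesis using c by fastforce
qed

definition quotient_conductance :: "'d set \<Rightarrow> ('d \<Rightarrow> 'd) \<Rightarrow> ('d \<Rightarrow> 'v) \<Rightarrow> ('d \<Rightarrow> real) \<Rightarrow> 'v \<Rightarrow> 'v \<Rightarrow> real"
  where "quotient_conductance D \<iota> \<pi> c u v = (\<Sum>d\<in>{d\<in>D. \<pi> d = u \<and> \<pi> (\<iota> d) = v}. c d)"

lemma quotient_conductance_connected:
  assumes fin: "finite D" and c: "\<forall>d\<in>D. c d > 0"
    and conn: "\<forall>d\<in>D. \<forall>d'\<in>D. (d, d') \<in> (dart_link D \<iota> \<pi>)\<^sup>*"
  shows "\<forall>u\<in>\<pi> ` D. \<forall>v\<in>\<pi> ` D. (u, v) \<in> (conductance_graph (\<pi> ` D) (quotient_conductance D \<iota> \<pi> c))\<^sup>*"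
proof -
  let ?C = "quotient_conductance D \<iota> \<pi> c"
  have edge: "?C (\<pi> d) (\<pi> (\<iota> d)) > 0" if "d \<in> D" for d
  proof -
    have "c d \<le> ?C (\<pi> d) (\<pi> (\<iota> d))" unfolding quotient_conductance_def
      by (rule member_le_sum) (use that c fin in \<open>auto intro: less_imp_le\<close>)
    then show ?thesis using c that by fastforce
  qed
  have "(\<pi> d, \<pi> d') \<in> (conductance_graph (\<pi> ` D) ?C)\<^sup>*" if "(d, d') \<in> (dart_link D \<iota> \<pi>)\<^sup>*" for d d'
    using that
  proof (induction rule: rtrancl_induct)
    case (step b e)
    then have "b \<in> D" "e \<in> D" "\<pi> b = \<pi> e \<or> e = \<iota> b" by (auto simp: dart_link_def)
    then have "\<pi> b = \<pi> e \<or> (\<pi> b, \<pi> e) \<in> conductance_graph (\<pi> ` D) ?C"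
      using edge by (auto simp: conductance_graph_def)
    then show ?case using step.IH by (auto intro: rtrancl_into_rtrancl)
  qed simp
  then show ?thesis using conn by blast
qed

lemma quotient_conductance_laplacian:
  assumes "finite D" "\<forall>d\<in>D. \<iota> d \<in> D" "d \<in> D"
  shows "(\<Sum>d'\<in>{d'\<in>D. \<pi> d' = \<pi> d}. c d' * (f (\<pi> (\<iota> d')) - f (\<pi> d')))
    = (\<Sum>v\<in>\<pi> ` D. quotient_conductance D \<iota> \<pi> c (\<pi> d) v * (f v - f (\<pi> d)))"
proof -
  let ?F = "{d'\<in>D. \<pi> d' = \<pi> d}"
  have "(\<Sum>d'\<in>?F. c d' * (f (\<pi> (\<iota> d')) - f (\<pi> d')))
      = (\<Sum>v\<in>\<pi> ` D. \<Sum>d'\<in>{x\<in>?F. \<pi> (\<iota> x) = v}. c d' * (f v - f (\<pi> d)))"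
    by (subst sum.group[symmetric, where g = "\<lambda>d'. \<pi> (\<iota> d')"])
      (use assms in \<open>auto intro!: sum.cong\<close>)
  then show ?thesis
    unfolding quotient_conductance_def by (simp add: sum_distrib_right)
qed

text \<open>Vertices are the fibres of pi; the equation reduces to the one on the quotient graph.\<close>

lemma dart_laplacian_solvable:
  fixes c :: "'d \<Rightarrow> real" and \<pi> :: "'d \<Rightarrow> 'v" and s :: "'v \<Rightarrow> real"
  assumes fin: "finite D" and inv: "\<forall>d\<in>D. \<iota> d \<in> D \<and> \<iota> (\<iota> d) = d"
    and c: "\<forall>d\<in>D. c d > 0 \<and> c (\<iota> d) = c d"
    and conn: "\<forall>d\<in>D. \<forall>d'\<in>D. (d, d') \<in> (dart_link D \<iota> \<pi>)\<^sup>*"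
    and total: "(\<Sum>v\<in>\<pi> ` D. s v) = 0"
  obtains f where "\<forall>d\<in>D. (\<Sum>d'\<in>{d'\<in>D. \<pi> d' = \<pi> d}. c d' * (f (\<pi> (\<iota> d')) - f (\<pi> d'))) = s (\<pi> d)"
proof -
  let ?C = "quotient_conductance D \<iota> \<pi> c"
  have sym: "\<forall>u\<in>\<pi> ` D. \<forall>v\<in>\<pi> ` D. ?C u v = ?C v u"
    unfolding quotient_conductance_def
    by (intro ballI sum.reindex_bij_witness[of _ \<iota> \<iota>]) (use inv c in auto)
  have nonneg: "\<forall>u\<in>\<pi> ` D. \<forall>v\<in>\<pi> ` D. ?C u v \<ge> 0"
    unfolding quotient_conductance_def by (intro ballI sum_nonneg) (use c in fastforce)
  have "\<forall>d\<in>D. c d > 0" using c by blast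
  then obtain f where f: "\<forall>u\<in>\<pi> ` D. (\<Sum>v\<in>\<pi> ` D. ?C u v * (f v - f u)) = s u"
    using laplacian_solvable[OF finite_imageI[OF fin] sym nonneg
        quotient_conductance_connected[OF fin _ conn] total] by blast
  have "(\<Sum>d'\<in>{d'\<in>D. \<pi> d' = \<pi> d}. c d' * (f (\<pi> (\<iota> d')) - f (\<pi> d'))) = s (\<pi> d)" if "d \<in> D" for d
    using inv f that by (subst quotient_conductance_laplacian[OF fin _ that]) auto
  then show thesis using that by blast
qed

section \<open>Edge paths in the double\<close>

lemma ldarts_simps [simp]: "Prim d \<in> ldarts D \<longleftrightarrow> d \<in> D" "Dual d \<in> ldarts D \<longleftrightarrow> d \<in> D"
  unfolding ldarts_def by auto

fun edge_path :: "'d ldart set \<Rightarrow> ('d \<Rightarrow> 'd) \<Rightarrow> ('d \<Rightarrow> 'd) \<Rightarrow> 'd set + 'd set \<Rightarrow> 'd ldart list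
    \<Rightarrow> 'd set + 'd set \<Rightarrow> bool" where
  "edge_path E \<sigma> \<iota> u [] v \<longleftrightarrow> u = v"
| "edge_path E \<sigma> \<iota> u (e # es) v \<longleftrightarrow> e \<in> E \<and> ltail \<sigma> \<iota> e = u \<and> edge_path E \<sigma> \<iota> (lhead \<sigma> \<iota> e) es v"

lemma edge_path_append:
  "edge_path E \<sigma> \<iota> u (xs @ ys) w \<longleftrightarrow> (\<exists>v. edge_path E \<sigma> \<iota> u xs v \<and> edge_path E \<sigma> \<iota> v ys w)"
  by (induction xs arbitrary: u) auto

lemma edge_path_set: "edge_path E \<sigma> \<iota> u xs v \<Longrightarrow> set xs \<subseteq> E"
  by (induction xs arbitrary: u) auto

lemma edge_path_is_path:
  "edge_path E \<sigma> \<iota> u xs v \<Longrightarrow> E \<subseteq> ldarts D \<Longrightarrow> xs \<noteq> [] \<Longrightarrow> is_path D \<sigma> \<iota> xs u v"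
proof (induction xs arbitrary: u)
  case (Cons e es)
  then show ?case by (cases es) (auto simp: is_path_def)
qed simp

lemma sum_list_chain_telescope:
  fixes h :: "'d set + 'd set \<Rightarrow> 'a::ab_group_add"
  shows "is_chain \<sigma> \<iota> xs \<Longrightarrow> xs \<noteq> [] \<Longrightarrow>
    (\<Sum>z\<leftarrow>xs. h (lhead \<sigma> \<iota> z) - h (ltail \<sigma> \<iota> z)) = h (lhead \<sigma> \<iota> (last xs)) - h (ltail \<sigma> \<iota> (hd xs))"
proof (induction \<sigma> \<iota> xs rule: is_chain.induct)
  case (3 \<sigma> \<iota> y z zs)
  then show ?case by (cases zs) (simp_all add: algebra_simps)
qed auto

lemma loop_sum_exact:
  fixes h :: "'d set + 'd set \<Rightarrow> 'a::ab_group_add"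
  assumes "is_loop D \<sigma> \<iota> \<gamma>" "\<forall>e\<in>set \<gamma>. w e = h (lhead \<sigma> \<iota> e) - h (ltail \<sigma> \<iota> e)"
  shows "sum_list (map w \<gamma>) = 0"
proof -
  obtain u where u: "is_path D \<sigma> \<iota> \<gamma> u u" using assms(1) unfolding is_loop_def by blast
  have "sum_list (map w \<gamma>) = (\<Sum>z\<leftarrow>\<gamma>. h (lhead \<sigma> \<iota> z) - h (ltail \<sigma> \<iota> z))"
    using assms(2) by (intro arg_cong[where f = sum_list] map_cong) auto
  then show ?thesis using u sum_list_chain_telescope[of \<sigma> \<iota> \<gamma> h] by (simp add: is_path_def)
qed

lemma chain_from_primal_vertex:
  "is_chain \<sigma> \<iota> xs \<Longrightarrow> set xs \<subseteq> ldarts D \<Longrightarrow> xs \<noteq> [] \<Longrightarrow> ltail \<sigma> \<iota> (hd xs) = Inl v \<Longrightarrow>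
    set xs \<subseteq> Prim ` D \<and> (\<exists>v'. lhead \<sigma> \<iota> (last xs) = Inl v')"
proof (induction \<sigma> \<iota> xs arbitrary: v rule: is_chain.induct)
  case (2 \<sigma> \<iota> y)
  then show ?case by (cases y) (auto simp: lhead_def)
next
  case (3 \<sigma> \<iota> y z zs)
  then obtain d where d: "y = Prim d" "d \<in> D" by (cases y) auto
  then have "ltail \<sigma> \<iota> z = Inl (orb \<sigma> (\<iota> d))" using 3(2) by (simp add: lhead_def)
  then show ?case using 3 d by auto
qed auto

lemma sum_list_rev_map_lrev:
  "\<forall>e\<in>set xs. w (lrev \<iota> e) = - w e \<Longrightarrow>
    sum_list (map w (rev (map (lrev \<iota>) xs))) = - sum_list (map (w :: _ \<Rightarrow> real) xs)"
  by (induction xs) auto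

lemma simple_path_primal:
  assumes "simple_path D \<sigma> \<iota> lam (Inl v0) x'"
  shows "set lam \<subseteq> Prim ` D" "\<exists>v1. x' = Inl v1" "distinct lam"
  using chain_from_primal_vertex[of \<sigma> \<iota> lam D v0] assms distinct_map[of "ltail \<sigma> \<iota>" lam]
  unfolding simple_path_def is_path_def by auto

context combinatorial_map
begin

lemma lrev_lrev [simp]: "x \<in> ldarts D \<Longrightarrow> lrev \<iota> (lrev \<iota> x) = x"
  by (cases x) auto

lemma lrev_in: "x \<in> ldarts D \<Longrightarrow> lrev \<iota> x \<in> ldarts D"
  by (cases x) (auto simp: iota_in)

lemma lhead_lrev: "x \<in> ldarts D \<Longrightarrow> lhead \<sigma> \<iota> (lrev \<iota> x) = ltail \<sigma> \<iota> x"
  unfolding lhead_def by simp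

lemma edge_path_rev:
  assumes "E \<subseteq> ldarts D" "\<forall>e\<in>E. lrev \<iota> e \<in> E"
  shows "edge_path E \<sigma> \<iota> u xs v \<Longrightarrow> edge_path E \<sigma> \<iota> v (rev (map (lrev \<iota>) xs)) u"
proof (induction xs arbitrary: u)
  case (Cons e es)
  then have "edge_path E \<sigma> \<iota> (lhead \<sigma> \<iota> e) [lrev \<iota> e] u"
    using assms lhead_lrev by (auto simp: lhead_def[of _ _ e])
  then show ?case using Cons by (auto simp: edge_path_append)
qed simp

text \<open>The potential integrates w along a path from a representative vertex chosen in each
connected component.\<close>

lemma loop_sums_zero_imp_potential:
  fixes w :: "'d ldart \<Rightarrow> real"
  assumes E: "E \<subseteq> ldarts D" "\<forall>e\<in>E. lrev \<iota> e \<in> E"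
    and anti: "\<forall>e\<in>E. w (lrev \<iota> e) = - w e"
    and loops: "\<forall>\<gamma>. is_loop D \<sigma> \<iota> \<gamma> \<and> set \<gamma> \<subseteq> E \<longrightarrow> sum_list (map w \<gamma>) = 0"
  obtains G where "\<forall>e\<in>E. w e = G (lhead \<sigma> \<iota> e) - G (ltail \<sigma> \<iota> e)"
proof -
  define conn where "conn u v \<longleftrightarrow> (\<exists>xs. edge_path E \<sigma> \<iota> u xs v)" for u v
  have conn_sym: "conn u v \<Longrightarrow> conn v u" for u v
    unfolding conn_def using edge_path_rev[OF E] by blast
  have conn_trans: "conn u v \<Longrightarrow> conn v v' \<Longrightarrow> conn u v'" for u v v'
    unfolding conn_def using edge_path_append by blast
  define rep where "rep u = (SOME r. conn r u)" for u
  have "conn (rep u) u" for u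
    unfolding rep_def by (rule someI[of _ u]) (auto simp: conn_def intro: exI[of _ "[]"])
  then have path: "edge_path E \<sigma> \<iota> (rep u) (SOME xs. edge_path E \<sigma> \<iota> (rep u) xs u) u" for u
    unfolding conn_def by (rule someI_ex)
  define G where "G u = sum_list (map w (SOME xs. edge_path E \<sigma> \<iota> (rep u) xs u))" for u
  have "w e = G (lhead \<sigma> \<iota> e) - G (ltail \<sigma> \<iota> e)" if e: "e \<in> E" for e
  proof -
    let ?u = "ltail \<sigma> \<iota> e" and ?v = "lhead \<sigma> \<iota> e"
    let ?p = "\<lambda>u. SOME xs. edge_path E \<sigma> \<iota> (rep u) xs u"
    have "conn ?u ?v" unfolding conn_def using e by (intro exI[of _ "[e]"]) simp
    then have "(\<lambda>r. conn r ?u) = (\<lambda>r. conn r ?v)" using conn_sym conn_trans by blast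
    then have same_rep: "rep ?u = rep ?v" unfolding rep_def by simp
    define L where "L = ?p ?u @ [e] @ rev (map (lrev \<iota>) (?p ?v))"
    have "edge_path E \<sigma> \<iota> (rep ?u) L (rep ?u)"
      unfolding L_def using path[of ?u] e edge_path_rev[OF E path[of ?v]] same_rep
      by (auto simp: edge_path_append)
    then have "sum_list (map w L) = 0"
      using loops edge_path_is_path[OF _ E(1)] edge_path_set unfolding is_loop_def L_def by blast
    moreover have "sum_list (map w (rev (map (lrev \<iota>) (?p ?v)))) = - G ?v"
      unfolding G_def using anti edge_path_set[OF path[of ?v]] by (intro sum_list_rev_map_lrev) auto
    ultimately show ?thesis unfolding L_def G_def by simp
  qed
  then show thesis using that by blast
qed

end

section \<open>Forms of type (1,0)\<close>

text \<open>On a dual edge the value of a (1,0)-form is forced by the one on the primal edge it crosses: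
type (1,0) together with rho(e) rho(e*) = 1 gives alpha(e*) = i rho(e) alpha(e).\<close>

definition type10_ext :: "'d set \<Rightarrow> ('d ldart \<Rightarrow> real) \<Rightarrow> ('d \<Rightarrow> complex) \<Rightarrow> 'd ldart \<Rightarrow> complex" where
  "type10_ext D \<rho> a x = (case x of
      Prim d \<Rightarrow> if d \<in> D then a d else 0
    | Dual d \<Rightarrow> if d \<in> D then \<i> * of_real (\<rho> (Prim d)) * a d else 0)"

lemma type10_ext_simps [simp]:
  "d \<in> D \<Longrightarrow> type10_ext D \<rho> a (Prim d) = a d"
  "d \<in> D \<Longrightarrow> type10_ext D \<rho> a (Dual d) = \<i> * of_real (\<rho> (Prim d)) * a d"
  unfolding type10_ext_def by auto

lemma type10_ext_zero: "\<forall>d\<in>D. a d = 0 \<Longrightarrow> type10_ext D \<rho> a x = 0"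
  unfolding type10_ext_def by (cases x) auto

lemma lverts_iff:
  "u \<in> lverts D \<sigma> \<iota> \<longleftrightarrow> (\<exists>d\<in>D. u = Inl (orb \<sigma> d)) \<or> (\<exists>d\<in>D. u = Inr (orb (\<sigma> \<circ> \<iota>) d))"
  unfolding lverts_def by auto

lemma face_int_residue: "face_int D \<sigma> \<iota> \<alpha> u = 2 * \<i> * pi * residue D \<sigma> \<iota> \<alpha> u"
  unfolding residue_def by simp

text \<open>The alpha of the theorem is the case part = Re, its beta the case part = Im.\<close>

definition normalized_third_kind :: "'d set \<Rightarrow> ('d \<Rightarrow> 'd) \<Rightarrow> ('d \<Rightarrow> 'd) \<Rightarrow> ('d ldart \<Rightarrow> real)
    \<Rightarrow> 'd set + 'd set \<Rightarrow> 'd set + 'd set \<Rightarrow> (complex \<Rightarrow> real) \<Rightarrow> 'd ldart list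
    \<Rightarrow> ('d ldart \<Rightarrow> complex) \<Rightarrow> bool" where
  "normalized_third_kind D \<sigma> \<iota> \<rho> x x' part lam \<alpha> \<longleftrightarrow>
     meromorphic D \<sigma> \<iota> \<rho> {x, x'} \<alpha> \<and> residue D \<sigma> \<iota> \<alpha> x = 1 \<and> residue D \<sigma> \<iota> \<alpha> x' = -1 \<and>
     (\<forall>\<gamma>. is_loop D \<sigma> \<iota> \<gamma> \<and> avoids_dual \<iota> \<gamma> lam \<longrightarrow> part (holonomy \<alpha> \<gamma>) = 0)"

locale conformal_map = combinatorial_map +
  fixes \<rho> :: "'d ldart \<Rightarrow> real"
  assumes conf_struct: "conf_struct D \<iota> \<rho>"
begin

lemma rho_pos: "d \<in> D \<Longrightarrow> \<rho> (Prim d) > 0"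
  and rho_iota: "d \<in> D \<Longrightarrow> \<rho> (Prim (\<iota> d)) = \<rho> (Prim d)"
  and rho_dual: "d \<in> D \<Longrightarrow> \<rho> (Dual d) * \<rho> (Prim d) = 1"
  using conf_struct unfolding conf_struct_def
  by (metis ldarts_simps(1) lrev.simps(1) lstar.simps(1) mult.commute)+

lemma one_form_type10_ext:
  assumes "\<forall>d\<in>D. a (\<iota> d) = - a d"
  shows "one_form D \<iota> (type10_ext D \<rho> a)"
  unfolding one_form_def
proof (intro conjI ballI allI impI)
  fix x assume "x \<in> ldarts D"
  then show "type10_ext D \<rho> a (lrev \<iota> x) = - type10_ext D \<rho> a x"
    using assms by (cases x) (auto simp: iota_in rho_iota)
next
  fix x :: "'d ldart" assume "x \<notin> ldarts D"
  then show "type10_ext D \<rho> a x = 0" unfolding type10_ext_def by (cases x) auto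
qed

lemma type10_type10_ext:
  assumes "\<forall>d\<in>D. a (\<iota> d) = - a d"
  shows "type10 D \<iota> \<rho> (type10_ext D \<rho> a)"
  unfolding type10_def hodge_def
proof
  fix x assume x: "x \<in> ldarts D"
  have rho: "complex_of_real (\<rho> (Dual d)) * complex_of_real (\<rho> (Prim d)) = 1" if "d \<in> D" for d
    using rho_dual[OF that] by (simp flip: of_real_mult)
  show "- complex_of_real (\<rho> (lstar \<iota> x)) * type10_ext D \<rho> a (lstar \<iota> x) = - \<i> * type10_ext D \<rho> a x"
    using x assms rho by (cases x) (auto simp: iota_in rho_iota algebra_simps)
qed

lemma type10_ext_eq:
  assumes "one_form D \<iota> \<alpha>" "type10 D \<iota> \<rho> \<alpha>"
  shows "\<alpha> = type10_ext D \<rho> (\<lambda>d. \<alpha> (Prim d))"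
proof
  fix x
  show "\<alpha> x = type10_ext D \<rho> (\<lambda>d. \<alpha> (Prim d)) x"
  proof (cases x)
    case (Dual d)
    show ?thesis
    proof (cases "d \<in> D")
      case True
      have "complex_of_real (\<rho> (Dual d)) * \<alpha> (Dual d) = \<i> * \<alpha> (Prim d)"
        using assms(2) True unfolding type10_def hodge_def by (metis ldarts_simps(1) lstar.simps(1) minus_mult_left neg_equal_iff_equal)
      moreover have "complex_of_real (\<rho> (Dual d)) * complex_of_real (\<rho> (Prim d)) = 1"
        using rho_dual[OF True] by (simp flip: of_real_mult)
      ultimately have "\<alpha> (Dual d) = \<i> * complex_of_real (\<rho> (Prim d)) * \<alpha> (Prim d)"
        by (metis (no_types, lifting) mult.assoc mult.commute mult_1)
      then show ?thesis using Dual True by simp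
    qed (use assms(1) Dual in \<open>auto simp: one_form_def type10_ext_def\<close>)
  qed (use assms(1) in \<open>auto simp: one_form_def type10_ext_def\<close>)
qed

lemma one_form_prim_anti: "one_form D \<iota> \<alpha> \<Longrightarrow> \<forall>d\<in>D. \<alpha> (Prim (\<iota> d)) = - \<alpha> (Prim d)"
  unfolding one_form_def by (metis ldarts_simps(1) lrev.simps(1))

lemma face_int_type10_ext_Inl:
  "face_int D \<sigma> \<iota> (type10_ext D \<rho> a) (Inl v)
    = \<i> * (\<Sum>d\<in>{d\<in>D. orb \<sigma> d = v}. of_real (\<rho> (Prim d)) * a d)"
proof -
  have "{x \<in> ldarts D. ltail \<sigma> \<iota> x = Inl v} = Prim ` {d\<in>D. orb \<sigma> d = v}"
    by (auto simp: ldarts_def)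
  then have "face_int D \<sigma> \<iota> (type10_ext D \<rho> a) (Inl v)
      = (\<Sum>d\<in>{d\<in>D. orb \<sigma> d = v}. type10_ext D \<rho> a (Dual d))"
    unfolding face_int_def by (simp add: sum.reindex inj_on_def)
  then show ?thesis by (simp add: sum_distrib_left mult.assoc)
qed

lemma face_int_type10_ext_Inr:
  "face_int D \<sigma> \<iota> (type10_ext D \<rho> a) (Inr F) = (\<Sum>d\<in>{d\<in>D. orb (\<sigma> \<circ> \<iota>) d = F}. a (\<iota> d))"
proof -
  have "{x \<in> ldarts D. ltail \<sigma> \<iota> x = Inr F} = Dual ` {d\<in>D. orb (\<sigma> \<circ> \<iota>) d = F}"
    by (auto simp: ldarts_def)
  then have "face_int D \<sigma> \<iota> (type10_ext D \<rho> a) (Inr F)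
      = (\<Sum>d\<in>{d\<in>D. orb (\<sigma> \<circ> \<iota>) d = F}. type10_ext D \<rho> a (Prim (\<iota> d)))"
    unfolding face_int_def by (simp add: sum.reindex inj_on_def)
  then show ?thesis by (simp add: iota_in)
qed

lemma meromorphic_type10_ext_real:
  fixes b :: "'d \<Rightarrow> real"
  assumes anti: "\<forall>d\<in>D. b (\<iota> d) = - b d"
    and vertex: "\<forall>d\<in>D. (\<Sum>d'\<in>{d'\<in>D. orb \<sigma> d' = orb \<sigma> d}. \<rho> (Prim d') * b d')
      = 2 * pi * ((if orb \<sigma> d = v0 then 1 else 0) - (if orb \<sigma> d = v1 then 1 else 0))"
    and face: "\<forall>d\<in>D. (\<Sum>d'\<in>{d'\<in>D. orb (\<sigma> \<circ> \<iota>) d' = orb (\<sigma> \<circ> \<iota>) d}. b d') = 0"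
    and v: "v0 \<in> orb \<sigma> ` D" "v1 \<in> orb \<sigma> ` D" "v0 \<noteq> v1"
  defines "\<alpha> \<equiv> type10_ext D \<rho> (\<lambda>d. complex_of_real (b d))"
  shows "meromorphic D \<sigma> \<iota> \<rho> {Inl v0, Inl v1} \<alpha> \<and>
    residue D \<sigma> \<iota> \<alpha> (Inl v0) = 1 \<and> residue D \<sigma> \<iota> \<alpha> (Inl v1) = -1"
proof -
  have at_vertex: "face_int D \<sigma> \<iota> \<alpha> (Inl (orb \<sigma> d))
      = 2 * \<i> * pi * ((if orb \<sigma> d = v0 then 1 else 0) - (if orb \<sigma> d = v1 then 1 else 0))"
    if "d \<in> D" for d
    using vertex that unfolding \<alpha>_def face_int_type10_ext_Inl
    by (simp flip: of_real_mult of_real_sum) (simp add: algebra_simps)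
  have at_face: "face_int D \<sigma> \<iota> \<alpha> (Inr (orb (\<sigma> \<circ> \<iota>) d)) = 0" if "d \<in> D" for d
    using face that anti unfolding \<alpha>_def face_int_type10_ext_Inr
    by (simp add: sum_negf flip: of_real_sum)
  obtain d0 d1 where d: "d0 \<in> D" "v0 = orb \<sigma> d0" "d1 \<in> D" "v1 = orb \<sigma> d1" using v by blast
  have res: "residue D \<sigma> \<iota> \<alpha> (Inl v0) = 1" "residue D \<sigma> \<iota> \<alpha> (Inl v1) = -1"
    using v(3) at_vertex[OF d(1)] at_vertex[OF d(3)] d unfolding residue_def by auto
  have "face_int D \<sigma> \<iota> \<alpha> u = 0" if "u \<in> lverts D \<sigma> \<iota> - {Inl v0, Inl v1}" for u
  proof -
    have "u \<in> lverts D \<sigma> \<iota>" "u \<noteq> Inl v0" "u \<noteq> Inl v1" using that by auto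
    then consider d where "d \<in> D" "u = Inl (orb \<sigma> d)" "orb \<sigma> d \<noteq> v0" "orb \<sigma> d \<noteq> v1"
      | d where "d \<in> D" "u = Inr (orb (\<sigma> \<circ> \<iota>) d)"
      unfolding lverts_iff by blast
    then show ?thesis using at_vertex at_face by cases simp_all
  qed
  moreover have "face_int D \<sigma> \<iota> \<alpha> u \<noteq> 0" if "u \<in> {Inl v0, Inl v1}" for u
    using that res unfolding residue_def by auto
  ultimately show ?thesis
    using res anti one_form_type10_ext type10_type10_ext
    unfolding meromorphic_def \<alpha>_def by auto
qed

end

section \<open>Existence\<close>

lemma Re_holonomy: "Re (holonomy \<alpha> \<gamma>) = (\<Sum>e\<leftarrow>\<gamma>. Re (\<alpha> e))"
  unfolding holonomy_def by (induction \<gamma>) auto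

lemma Im_holonomy: "Im (holonomy \<alpha> \<gamma>) = (\<Sum>e\<leftarrow>\<gamma>. Im (\<alpha> e))"
  unfolding holonomy_def by (induction \<gamma>) auto

lemma sum_delta_diff:
  assumes "finite V" "v0 \<in> V" "v1 \<in> V"
  shows "(\<Sum>v\<in>V. c * ((if v = v0 then 1 else 0) - (if v = v1 then 1 else 0))) = (0 :: real)"
  using assms by (simp add: sum_subtractf sum.delta flip: sum_distrib_left)

definition path_indicator :: "('d \<Rightarrow> 'd) \<Rightarrow> 'd ldart list \<Rightarrow> 'd \<Rightarrow> real" where
  "path_indicator \<iota> lam d =
     (\<Sum>z\<in>set lam. (if z = Prim d then 1 else 0) - (if z = Prim (\<iota> d) then 1 else 0))"

context combinatorial_map
begin

lemma involution_darts: "\<forall>d\<in>D. \<iota> d \<in> D \<and> \<iota> (\<iota> d) = d"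
  using iota_in by simp

lemma face_sum_exact:
  assumes "d0 \<in> D"
  shows "(\<Sum>d\<in>{d\<in>D. orb (\<sigma> \<circ> \<iota>) d = orb (\<sigma> \<circ> \<iota>) d0}. g (orb \<sigma> (\<iota> d)) - g (orb \<sigma> d)) = (0 :: real)"
proof -
  let ?F = "{d\<in>D. orb (\<sigma> \<circ> \<iota>) d = orb (\<sigma> \<circ> \<iota>) d0}"
  have "(\<Sum>d\<in>?F. g (orb \<sigma> (\<iota> d))) = (\<Sum>d\<in>?F. g (orb \<sigma> ((\<sigma> \<circ> \<iota>) d)))"
    by (intro sum.cong) (auto simp: orb_sigma_apply iota_in)
  also have "\<dots> = (\<Sum>d\<in>?F. g (orb \<sigma> d))"
    using sum_fiber_reindex[OF bij_sigma_iota, of "orb (\<sigma> \<circ> \<iota>)" "\<lambda>d. g (orb \<sigma> d)"] orb_face_apply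
    by simp
  finally show ?thesis by (simp add: sum_subtractf)
qed

lemma vertex_sum_dual_exact:
  assumes "d0 \<in> D"
  shows "(\<Sum>d\<in>{d\<in>D. orb \<sigma> d = orb \<sigma> d0}. g (orb (\<sigma> \<circ> \<iota>) (\<iota> d)) - g (orb (\<sigma> \<circ> \<iota>) d)) = (0 :: real)"
proof -
  let ?F = "{d\<in>D. orb \<sigma> d = orb \<sigma> d0}"
  have "(\<Sum>d\<in>?F. g (orb (\<sigma> \<circ> \<iota>) (\<iota> d))) = (\<Sum>d\<in>?F. g (orb (\<sigma> \<circ> \<iota>) (\<sigma> d)))"
    by (intro sum.cong) (auto simp: orb_face_iota)
  also have "\<dots> = (\<Sum>d\<in>?F. g (orb (\<sigma> \<circ> \<iota>) d))"
    using sum_fiber_reindex[OF bij_sigma, of "orb \<sigma>" "\<lambda>d. g (orb (\<sigma> \<circ> \<iota>) d)"] orb_sigma_apply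
    by simp
  finally show ?thesis by (simp add: sum_subtractf)
qed

lemma path_indicator_iota: "d \<in> D \<Longrightarrow> path_indicator \<iota> lam (\<iota> d) = - path_indicator \<iota> lam d"
  unfolding path_indicator_def by (simp add: sum_negf[symmetric])

lemma path_indicator_avoids:
  assumes "avoids_dual \<iota> \<gamma> lam" "Dual d \<in> set \<gamma>" "d \<in> D"
  shows "path_indicator \<iota> lam d = 0"
proof -
  have "z \<noteq> Prim d \<and> z \<noteq> Prim (\<iota> d)" if "z \<in> set lam" for z
    using assms that unfolding avoids_dual_def by (metis lrev.simps(2) lstar.simps(1) iota_iota)
  then show ?thesis unfolding path_indicator_def by (simp cong: sum.cong)
qed

lemma path_indicator_vertex_sum:
  assumes prim: "set lam \<subseteq> Prim ` D" and chain: "is_chain \<sigma> \<iota> lam" and "lam \<noteq> []"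
    and ends: "ltail \<sigma> \<iota> (hd lam) = Inl v0" "lhead \<sigma> \<iota> (last lam) = Inl v1"
    and "distinct lam" and "d0 \<in> D"
  shows "(\<Sum>d\<in>{d\<in>D. orb \<sigma> d = orb \<sigma> d0}. path_indicator \<iota> lam d)
    = (if orb \<sigma> d0 = v0 then 1 else 0) - (if orb \<sigma> d0 = v1 then 1 else 0)"
proof -
  let ?F = "{d\<in>D. orb \<sigma> d = orb \<sigma> d0}"
  define H :: "'d set + 'd set \<Rightarrow> real" where "H u = (if u = Inl (orb \<sigma> d0) then 1 else 0)" for u
  have edge: "(\<Sum>d\<in>?F. (if z = Prim d then 1 else 0) - (if z = Prim (\<iota> d) then 1 else 0))
      = H (ltail \<sigma> \<iota> z) - H (lhead \<sigma> \<iota> z)" if z: "z \<in> set lam" for z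
  proof -
    obtain e where e: "z = Prim e" "e \<in> D" using z prim by auto
    have "(\<Sum>d\<in>?F. (if z = Prim (\<iota> d) then 1 else 0)) = (\<Sum>d\<in>?F. (if d = \<iota> e then 1 else 0 :: real))"
      by (intro sum.cong) (use e iota_in in auto)
    then show ?thesis
      using e iota_in[OF e(2)] finite_darts
      by (simp add: sum_subtractf sum.delta' H_def lhead_def eq_commute[of e])
  qed
  have "(\<Sum>d\<in>?F. path_indicator \<iota> lam d)
      = (\<Sum>z\<in>set lam. \<Sum>d\<in>?F. (if z = Prim d then 1 else 0) - (if z = Prim (\<iota> d) then 1 else 0))"
    unfolding path_indicator_def by (rule sum.swap)
  also have "\<dots> = (\<Sum>z\<leftarrow>lam. H (ltail \<sigma> \<iota> z) - H (lhead \<sigma> \<iota> z))"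
    using edge \<open>distinct lam\<close> by (simp add: sum_list_distinct_conv_sum_set)
  also have "\<dots> = - (\<Sum>z\<leftarrow>lam. H (lhead \<sigma> \<iota> z) - H (ltail \<sigma> \<iota> z))"
    by (induction lam) auto
  also have "\<dots> = H (Inl v0) - H (Inl v1)"
    using sum_list_chain_telescope[OF chain \<open>lam \<noteq> []\<close>, of H] ends by simp
  finally show ?thesis unfolding H_def by auto
qed

end

context conformal_map
begin

lemma rho_prim_weights: "\<forall>d\<in>D. \<rho> (Prim d) > 0 \<and> \<rho> (Prim (\<iota> d)) = \<rho> (Prim d)"
  using rho_pos rho_iota by blast

lemma rho_dual_weights: "\<forall>d\<in>D. 1 / \<rho> (Prim d) > 0 \<and> 1 / \<rho> (Prim (\<iota> d)) = 1 / \<rho> (Prim d)"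
  using rho_pos rho_iota by simp

lemma ex_dual_correction:
  fixes j :: "'d \<Rightarrow> real"
  assumes anti: "\<forall>d\<in>D. j (\<iota> d) = - j d"
  obtains g where "\<forall>d\<in>D. (\<Sum>d'\<in>{d'\<in>D. orb (\<sigma> \<circ> \<iota>) d' = orb (\<sigma> \<circ> \<iota>) d}.
    (g (orb (\<sigma> \<circ> \<iota>) (\<iota> d')) - g (orb (\<sigma> \<circ> \<iota>) d') + j d') / \<rho> (Prim d')) = 0"
proof -
  let ?\<phi> = "orb (\<sigma> \<circ> \<iota>)"
  define s where "s F = - (\<Sum>d\<in>{d\<in>D. ?\<phi> d = F}. j d / \<rho> (Prim d))" for F
  have "(\<Sum>d\<in>D. j d / \<rho> (Prim d)) = (\<Sum>d\<in>D. j (\<iota> d) / \<rho> (Prim (\<iota> d)))"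
    using sum_involution_reindex[OF involution_darts, of "\<lambda>d. j d / \<rho> (Prim d)"] by simp
  also have "\<dots> = - (\<Sum>d\<in>D. j d / \<rho> (Prim d))"
    using anti rho_iota by (simp add: sum_negf[symmetric])
  finally have "(\<Sum>d\<in>D. j d / \<rho> (Prim d)) = 0" by simp
  then have "(\<Sum>F\<in>?\<phi> ` D. s F) = 0"
    unfolding s_def sum_negf sum.group[OF finite_darts finite_imageI[OF finite_darts] subset_refl]
    by simp
  then obtain g where g: "\<forall>d\<in>D. (\<Sum>d'\<in>{d'\<in>D. ?\<phi> d' = ?\<phi> d}.
      1 / \<rho> (Prim d') * (g (?\<phi> (\<iota> d')) - g (?\<phi> d'))) = s (?\<phi> d)"
    by (rule dart_laplacian_solvable[OF finite_darts involution_darts rho_dual_weights face_link_connected])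
  have "(\<Sum>d'\<in>{d'\<in>D. ?\<phi> d' = ?\<phi> d}. (g (?\<phi> (\<iota> d')) - g (?\<phi> d') + j d') / \<rho> (Prim d')) = 0"
    if "d \<in> D" for d
    using g that unfolding s_def by (simp add: add_divide_distrib sum.distrib)
  then show thesis using that by blast
qed

text \<open>Take the primal values df, where f solves the Laplace equation with source
2 pi (delta v0 - delta v1): the real part of the form is df on primal edges and vanishes on dual
ones, hence is exact.\<close>

lemma ex_normalized_Re:
  assumes v: "v0 \<in> orb \<sigma> ` D" "v1 \<in> orb \<sigma> ` D" "v0 \<noteq> v1"
  shows "\<exists>\<alpha>. normalized_third_kind D \<sigma> \<iota> \<rho> (Inl v0) (Inl v1) Re lam \<alpha>"
proof -
  define s where "s v = 2 * pi * ((if v = v0 then 1 else 0) - (if v = v1 then 1 else 0))" for v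
  obtain f where f: "\<forall>d\<in>D. (\<Sum>d'\<in>{d'\<in>D. orb \<sigma> d' = orb \<sigma> d}.
      \<rho> (Prim d') * (f (orb \<sigma> (\<iota> d')) - f (orb \<sigma> d'))) = s (orb \<sigma> d)"
  proof (rule dart_laplacian_solvable[OF finite_darts involution_darts rho_prim_weights vertex_link_connected])
    show "(\<Sum>v\<in>orb \<sigma> ` D. s v) = 0"
      unfolding s_def by (rule sum_delta_diff[OF finite_imageI[OF finite_darts] v(1,2)])
  qed
  define \<alpha> where "\<alpha> = type10_ext D \<rho> (\<lambda>d. complex_of_real (f (orb \<sigma> (\<iota> d)) - f (orb \<sigma> d)))"
  have anti: "\<forall>d\<in>D. f (orb \<sigma> (\<iota> (\<iota> d))) - f (orb \<sigma> (\<iota> d)) = - (f (orb \<sigma> (\<iota> d)) - f (orb \<sigma> d))"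
    by simp
  have face: "\<forall>d\<in>D. (\<Sum>d'\<in>{d'\<in>D. orb (\<sigma> \<circ> \<iota>) d' = orb (\<sigma> \<circ> \<iota>) d}.
      f (orb \<sigma> (\<iota> d')) - f (orb \<sigma> d')) = 0"
    using face_sum_exact by blast
  have "meromorphic D \<sigma> \<iota> \<rho> {Inl v0, Inl v1} \<alpha> \<and>
      residue D \<sigma> \<iota> \<alpha> (Inl v0) = 1 \<and> residue D \<sigma> \<iota> \<alpha> (Inl v1) = -1"
    unfolding \<alpha>_def by (rule meromorphic_type10_ext_real[OF anti f[unfolded s_def] face v])
  moreover have "Re (holonomy \<alpha> \<gamma>) = 0" if "is_loop D \<sigma> \<iota> \<gamma>" for \<gamma>
  proof -
    define R :: "'d set + 'd set \<Rightarrow> real" where "R u = (case u of Inl v \<Rightarrow> f v | Inr _ \<Rightarrow> 0)" for u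
    have "set \<gamma> \<subseteq> ldarts D" using that unfolding is_loop_def is_path_def by auto
    have "Re (\<alpha> e) = R (lhead \<sigma> \<iota> e) - R (ltail \<sigma> \<iota> e)" if "e \<in> ldarts D" for e
      using that unfolding \<alpha>_def R_def by (cases e) (auto simp: lhead_def)
    then have "\<forall>e\<in>set \<gamma>. Re (\<alpha> e) = R (lhead \<sigma> \<iota> e) - R (ltail \<sigma> \<iota> e)"
      using \<open>set \<gamma> \<subseteq> ldarts D\<close> by blast
    then show ?thesis unfolding Re_holonomy by (rule loop_sum_exact[OF that])
  qed
  ultimately show ?thesis unfolding normalized_third_kind_def by blast
qed

text \<open>Take the primal values (dg + 2 pi J) / rho, where J is the indicator of lam (which has the
required divergence) and g makes them closed around the faces: the imaginary part of the form
vanishes on primal edges and is dg + 2 pi J on dual ones, and J vanishes on loops avoiding lam*.\<close>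

lemma ex_normalized_Im:
  assumes v: "v0 \<in> orb \<sigma> ` D" "v1 \<in> orb \<sigma> ` D" "v0 \<noteq> v1"
    and lam: "simple_path D \<sigma> \<iota> lam (Inl v0) (Inl v1)"
  shows "\<exists>\<beta>. normalized_third_kind D \<sigma> \<iota> \<rho> (Inl v0) (Inl v1) Im lam \<beta>"
proof -
  let ?\<phi> = "orb (\<sigma> \<circ> \<iota>)"
  define J where "J = path_indicator \<iota> lam"
  have J_anti: "\<forall>d\<in>D. 2 * pi * J (\<iota> d) = - (2 * pi * J d)"
    unfolding J_def by (simp add: path_indicator_iota)
  obtain g where g: "\<forall>d\<in>D. (\<Sum>d'\<in>{d'\<in>D. ?\<phi> d' = ?\<phi> d}.
      (g (?\<phi> (\<iota> d')) - g (?\<phi> d') + 2 * pi * J d') / \<rho> (Prim d')) = 0"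
    by (rule ex_dual_correction[OF J_anti])
  define b where "b d = (g (?\<phi> (\<iota> d)) - g (?\<phi> d) + 2 * pi * J d) / \<rho> (Prim d)" for d
  define \<beta> where "\<beta> = type10_ext D \<rho> (\<lambda>d. complex_of_real (b d))"
  have anti: "\<forall>d\<in>D. b (\<iota> d) = - b d"
    using rho_iota unfolding b_def J_def by (simp add: path_indicator_iota diff_divide_distrib add_divide_distrib)
  have "\<forall>d\<in>D. (\<Sum>d'\<in>{d'\<in>D. orb \<sigma> d' = orb \<sigma> d}. \<rho> (Prim d') * b d')
      = 2 * pi * ((if orb \<sigma> d = v0 then 1 else 0) - (if orb \<sigma> d = v1 then 1 else 0))"
  proof
    fix d assume d: "d \<in> D"
    have "(\<Sum>d'\<in>{d'\<in>D. orb \<sigma> d' = orb \<sigma> d}. \<rho> (Prim d') * b d')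
        = (\<Sum>d'\<in>{d'\<in>D. orb \<sigma> d' = orb \<sigma> d}. g (?\<phi> (\<iota> d')) - g (?\<phi> d'))
          + 2 * pi * (\<Sum>d'\<in>{d'\<in>D. orb \<sigma> d' = orb \<sigma> d}. J d')"
      using rho_pos unfolding b_def
      by (simp add: sum_distrib_left flip: sum.distrib cong: sum.cong) (rule sum.cong; force)
    then show "(\<Sum>d'\<in>{d'\<in>D. orb \<sigma> d' = orb \<sigma> d}. \<rho> (Prim d') * b d')
      = 2 * pi * ((if orb \<sigma> d = v0 then 1 else 0) - (if orb \<sigma> d = v1 then 1 else 0))"
      using vertex_sum_dual_exact[OF d, of g] path_indicator_vertex_sum[OF _ _ _ _ _ _ d] lam
        simple_path_primal[OF lam]
      unfolding J_def simple_path_def is_path_def by simp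
  qed
  then have "meromorphic D \<sigma> \<iota> \<rho> {Inl v0, Inl v1} \<beta> \<and>
      residue D \<sigma> \<iota> \<beta> (Inl v0) = 1 \<and> residue D \<sigma> \<iota> \<beta> (Inl v1) = -1"
    unfolding \<beta>_def by (rule meromorphic_type10_ext_real[OF anti _ g[folded b_def] v])
  moreover have "Im (holonomy \<beta> \<gamma>) = 0" if "is_loop D \<sigma> \<iota> \<gamma>" "avoids_dual \<iota> \<gamma> lam" for \<gamma>
  proof -
    define R :: "'d set + 'd set \<Rightarrow> real" where "R u = (case u of Inl _ \<Rightarrow> 0 | Inr F \<Rightarrow> g F)" for u
    have "Im (\<beta> e) = R (lhead \<sigma> \<iota> e) - R (ltail \<sigma> \<iota> e)" if "e \<in> set \<gamma>" "e \<in> ldarts D" for e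
    proof (cases e)
      case (Dual d)
      then have "J d = 0" using that path_indicator_avoids[OF \<open>avoids_dual \<iota> \<gamma> lam\<close>] unfolding J_def by simp
      moreover have "\<rho> (Prim d) \<noteq> 0" using rho_pos Dual that(2) by force
      ultimately show ?thesis using Dual that unfolding \<beta>_def R_def b_def by (simp add: lhead_def)
    qed (use that in \<open>simp add: \<beta>_def R_def lhead_def\<close>)
    moreover have "set \<gamma> \<subseteq> ldarts D" using that(1) unfolding is_loop_def is_path_def by auto
    ultimately have "\<forall>e\<in>set \<gamma>. Im (\<beta> e) = R (lhead \<sigma> \<iota> e) - R (ltail \<sigma> \<iota> e)" by blast
    then show ?thesis unfolding Im_holonomy by (rule loop_sum_exact[OF that(1)])
  qed
  ultimately show ?thesis unfolding normalized_third_kind_def by blast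
qed

end

section \<open>Uniqueness\<close>

lemma heads_in_tails:
  "is_chain \<sigma> \<iota> (z # rest) \<Longrightarrow> lhead \<sigma> \<iota> (last (z # rest)) = x' \<Longrightarrow>
    \<forall>y\<in>set (z # rest). lhead \<sigma> \<iota> y \<in> set (map (ltail \<sigma> \<iota>) rest) \<union> {x'}"
proof (induction rest arbitrary: z)
  case (Cons a rest)
  then show ?case by auto
qed simp

lemma is_chain_tl: "is_chain \<sigma> \<iota> (z # rest) \<Longrightarrow> is_chain \<sigma> \<iota> rest"
  by (cases rest) auto

lemma meromorphic_diff:
  assumes "meromorphic D \<sigma> \<iota> \<rho> P \<alpha>1" "meromorphic D \<sigma> \<iota> \<rho> P \<alpha>2"
    and "\<forall>u\<in>P. face_int D \<sigma> \<iota> \<alpha>1 u = face_int D \<sigma> \<iota> \<alpha>2 u"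
  shows "meromorphic D \<sigma> \<iota> \<rho> {} (\<lambda>e. \<alpha>1 e - \<alpha>2 e)"
proof -
  have "face_int D \<sigma> \<iota> (\<lambda>e. \<alpha>1 e - \<alpha>2 e) u = face_int D \<sigma> \<iota> \<alpha>1 u - face_int D \<sigma> \<iota> \<alpha>2 u" for u
    unfolding face_int_def by (rule sum_subtractf)
  moreover have "face_int D \<sigma> \<iota> \<alpha>1 u = face_int D \<sigma> \<iota> \<alpha>2 u" if "u \<in> lverts D \<sigma> \<iota>" for u
    using assms that unfolding meromorphic_def by (cases "u \<in> P") auto
  ultimately have "\<forall>u\<in>lverts D \<sigma> \<iota>. face_int D \<sigma> \<iota> (\<lambda>e. \<alpha>1 e - \<alpha>2 e) u = 0" by simp
  then show ?thesis
    using assms unfolding meromorphic_def one_form_def type10_def hodge_def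
    by (auto simp: algebra_simps)
qed

lemma meromorphic_mult:
  "meromorphic D \<sigma> \<iota> \<rho> {} \<alpha> \<Longrightarrow> meromorphic D \<sigma> \<iota> \<rho> {} (\<lambda>e. c * \<alpha> e)"
  unfolding meromorphic_def one_form_def type10_def hodge_def face_int_def
  by (auto simp: algebra_simps simp flip: sum_distrib_left)

lemma holonomy_mult: "holonomy (\<lambda>e. c * \<alpha> e) \<gamma> = c * holonomy \<alpha> \<gamma>"
  unfolding holonomy_def by (induction \<gamma>) (auto simp: algebra_simps)

lemma holonomy_diff: "holonomy (\<lambda>e. \<alpha>1 e - \<alpha>2 e) \<gamma> = holonomy \<alpha>1 \<gamma> - holonomy \<alpha>2 \<gamma>"
  unfolding holonomy_def by (induction \<gamma>) auto

definition dual_edges_avoiding :: "'d set \<Rightarrow> ('d \<Rightarrow> 'd) \<Rightarrow> 'd ldart list \<Rightarrow> 'd ldart set" where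
  "dual_edges_avoiding D \<iota> lam = {e \<in> Dual ` D. \<forall>z\<in>set lam. e \<noteq> lstar \<iota> z \<and> e \<noteq> lrev \<iota> (lstar \<iota> z)}"

context combinatorial_map
begin

lemma dual_edges_avoiding_lrev:
  assumes "set lam \<subseteq> Prim ` D" "e \<in> dual_edges_avoiding D \<iota> lam"
  shows "lrev \<iota> e \<in> dual_edges_avoiding D \<iota> lam"
proof -
  obtain d where d: "e = Dual d" "d \<in> D" using assms(2) unfolding dual_edges_avoiding_def by auto
  have "Dual (\<iota> d) \<noteq> lstar \<iota> z \<and> Dual (\<iota> d) \<noteq> lrev \<iota> (lstar \<iota> z)" if z: "z \<in> set lam" for z
  proof -
    obtain c where c: "z = Prim c" "c \<in> D" using z assms(1) by auto
    then have "d \<noteq> c" "d \<noteq> \<iota> c" using assms(2) z d unfolding dual_edges_avoiding_def by auto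
    then show ?thesis using c d by (auto dest: arg_cong[where f = \<iota>])
  qed
  then show ?thesis using d iota_in unfolding dual_edges_avoiding_def by auto
qed

text \<open>At the start of the path only its first edge can carry the flow, so the vanishing
divergence there kills it; the rest follows by induction along the path.\<close>

lemma divergence_free_on_simple_path:
  fixes h :: "'d \<Rightarrow> real"
  assumes "set lam \<subseteq> Prim ` D" "is_chain \<sigma> \<iota> lam" "distinct (map (ltail \<sigma> \<iota>) lam @ [x'])"
    "lam \<noteq> [] \<longrightarrow> lhead \<sigma> \<iota> (last lam) = x'"
    "\<forall>d\<in>D. h (\<iota> d) = - h d" "\<forall>d\<in>D. (\<Sum>d'\<in>{d'\<in>D. orb \<sigma> d' = orb \<sigma> d}. h d') = 0"
    "\<forall>d\<in>D. h d \<noteq> 0 \<longrightarrow> Prim d \<in> set lam \<or> Prim (\<iota> d) \<in> set lam"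
  shows "\<forall>d\<in>D. h d = 0"
  using assms
proof (induction lam)
  case (Cons z rest)
  obtain e where e: "z = Prim e" "e \<in> D" using Cons.prems(1) by auto
  have heads: "\<forall>y\<in>set (z # rest). lhead \<sigma> \<iota> y \<in> set (map (ltail \<sigma> \<iota>) rest) \<union> {x'}"
    using heads_in_tails[of \<sigma> \<iota> z rest x'] Cons.prems(2,4) by simp
  have fresh: "ltail \<sigma> \<iota> z \<notin> set (map (ltail \<sigma> \<iota>) rest) \<union> {x'}" using Cons.prems(3) by auto
  have "h d' = 0" if d': "d' \<in> D" "orb \<sigma> d' = orb \<sigma> e" "d' \<noteq> e" for d'
  proof (rule ccontr)
    assume "h d' \<noteq> 0"
    then have "Prim d' \<in> set rest \<or> Prim (\<iota> d') \<in> set (z # rest)" using Cons.prems(7) d' e by auto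
    moreover have "ltail \<sigma> \<iota> (Prim d') = ltail \<sigma> \<iota> z" "lhead \<sigma> \<iota> (Prim (\<iota> d')) = ltail \<sigma> \<iota> z"
      using d' e by (simp_all add: lhead_def)
    ultimately show False using heads fresh by (metis UnCI image_eqI list.set_map)
  qed
  then have "(\<Sum>d'\<in>{d'\<in>D. orb \<sigma> d' = orb \<sigma> e}. h d') = h e"
    using e finite_darts by (simp add: sum.remove[of _ e] sum.neutral)
  then have he: "h e = 0" "h (\<iota> e) = 0" using Cons.prems(5,6) e by auto
  have "\<forall>d\<in>D. h d \<noteq> 0 \<longrightarrow> Prim d \<in> set rest \<or> Prim (\<iota> d) \<in> set rest"
    using Cons.prems(7) e he by (metis iota_iota set_ConsD ldart.inject(1))
  then show ?case
    using Cons.IH Cons.prems(1,3,4,5,6) is_chain_tl[OF Cons.prems(2)] by auto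
qed simp

end

context conformal_map
begin

lemma primal_harmonic_exact_zero:
  fixes w :: "'d ldart \<Rightarrow> real"
  assumes anti: "\<forall>d\<in>D. w (Prim (\<iota> d)) = - w (Prim d)"
    and loops: "\<forall>\<gamma>. is_loop D \<sigma> \<iota> \<gamma> \<and> set \<gamma> \<subseteq> Prim ` D \<longrightarrow> sum_list (map w \<gamma>) = 0"
    and harmonic: "\<forall>d\<in>D. (\<Sum>d'\<in>{d'\<in>D. orb \<sigma> d' = orb \<sigma> d}. \<rho> (Prim d') * w (Prim d')) = 0"
  shows "\<forall>d\<in>D. w (Prim d) = 0"
proof -
  have E: "Prim ` D \<subseteq> ldarts D" "\<forall>e\<in>Prim ` D. lrev \<iota> e \<in> Prim ` D" using iota_in by auto
  obtain G where G: "\<forall>e\<in>Prim ` D. w e = G (lhead \<sigma> \<iota> e) - G (ltail \<sigma> \<iota> e)"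
    by (rule loop_sums_zero_imp_potential[OF E _ loops]) (use anti in auto)
  define f where "f v = G (Inl v)" for v
  have wf: "w (Prim d) = f (orb \<sigma> (\<iota> d)) - f (orb \<sigma> d)" if "d \<in> D" for d
    using G that unfolding f_def by (auto simp: lhead_def)
  have "\<forall>d\<in>D. (\<Sum>d'\<in>{d'\<in>D. orb \<sigma> d' = orb \<sigma> d}. \<rho> (Prim d') * (f (orb \<sigma> (\<iota> d')) - f (orb \<sigma> d'))) = 0"
  proof
    fix d assume "d \<in> D"
    have "(\<Sum>d'\<in>{d'\<in>D. orb \<sigma> d' = orb \<sigma> d}. \<rho> (Prim d') * (f (orb \<sigma> (\<iota> d')) - f (orb \<sigma> d')))
        = (\<Sum>d'\<in>{d'\<in>D. orb \<sigma> d' = orb \<sigma> d}. \<rho> (Prim d') * w (Prim d'))"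
      by (rule sum.cong) (auto simp: wf)
    then show "(\<Sum>d'\<in>{d'\<in>D. orb \<sigma> d' = orb \<sigma> d}. \<rho> (Prim d') * (f (orb \<sigma> (\<iota> d')) - f (orb \<sigma> d'))) = 0"
      using harmonic \<open>d \<in> D\<close> by simp
  qed
  then have "\<forall>d\<in>D. f (orb \<sigma> (\<iota> d)) = f (orb \<sigma> d)"
    by (rule harmonic_edge_constant[OF finite_darts involution_darts rho_prim_weights])
  then show ?thesis using wf by simp
qed

text \<open>Off the cut lam* the cocycle w is the differential of a function g on faces; the defect
w - dg is a divergence-free flow supported on lam, hence zero, so w = dg is harmonic for the
conductances 1/rho.\<close>

lemma dual_harmonic_exact_off_path_zero:
  fixes w :: "'d ldart \<Rightarrow> real"
  assumes lam: "set lam \<subseteq> Prim ` D" "is_chain \<sigma> \<iota> lam" "distinct (map (ltail \<sigma> \<iota>) lam @ [x'])"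
      "lam \<noteq> [] \<longrightarrow> lhead \<sigma> \<iota> (last lam) = x'"
    and anti: "\<forall>d\<in>D. w (Dual (\<iota> d)) = - w (Dual d)"
    and loops: "\<forall>\<gamma>. is_loop D \<sigma> \<iota> \<gamma> \<and> avoids_dual \<iota> \<gamma> lam \<and> set \<gamma> \<subseteq> Dual ` D \<longrightarrow> sum_list (map w \<gamma>) = 0"
    and closed: "\<forall>d\<in>D. (\<Sum>d'\<in>{d'\<in>D. orb \<sigma> d' = orb \<sigma> d}. w (Dual d')) = 0"
    and harmonic: "\<forall>d\<in>D. (\<Sum>d'\<in>{d'\<in>D. orb (\<sigma> \<circ> \<iota>) d' = orb (\<sigma> \<circ> \<iota>) d}. w (Dual d') / \<rho> (Prim d')) = 0"
  shows "\<forall>d\<in>D. w (Dual d) = 0"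
proof -
  let ?E = "dual_edges_avoiding D \<iota> lam" and ?\<phi> = "orb (\<sigma> \<circ> \<iota>)"
  have E: "?E \<subseteq> ldarts D" "\<forall>e\<in>?E. lrev \<iota> e \<in> ?E"
    using dual_edges_avoiding_lrev[OF lam(1)] by (auto simp: dual_edges_avoiding_def)
  have loops_E: "\<forall>\<gamma>. is_loop D \<sigma> \<iota> \<gamma> \<and> set \<gamma> \<subseteq> ?E \<longrightarrow> sum_list (map w \<gamma>) = 0"
    using loops unfolding avoids_dual_def dual_edges_avoiding_def by blast
  have anti_E: "\<forall>e\<in>?E. w (lrev \<iota> e) = - w e"
    using anti unfolding dual_edges_avoiding_def by auto
  obtain G where G: "\<forall>e\<in>?E. w e = G (lhead \<sigma> \<iota> e) - G (ltail \<sigma> \<iota> e)"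
    by (rule loop_sums_zero_imp_potential[OF E anti_E loops_E])
  define g where "g F = G (Inr F)" for F
  define h where "h d = w (Dual d) - (g (?\<phi> (\<iota> d)) - g (?\<phi> d))" for d
  have "\<forall>d\<in>D. h (\<iota> d) = - h d" unfolding h_def using anti by auto
  moreover have "\<forall>d\<in>D. (\<Sum>d'\<in>{d'\<in>D. orb \<sigma> d' = orb \<sigma> d}. h d') = 0"
    using closed vertex_sum_dual_exact unfolding h_def by (simp add: sum_subtractf)
  moreover have "\<forall>d\<in>D. h d \<noteq> 0 \<longrightarrow> Prim d \<in> set lam \<or> Prim (\<iota> d) \<in> set lam"
  proof (intro ballI impI)
    fix d assume d: "d \<in> D" "h d \<noteq> 0"
    then have "Dual d \<notin> ?E" using G unfolding h_def g_def by (auto simp: lhead_def)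
    then obtain z where z: "z \<in> set lam" "Dual d = lstar \<iota> z \<or> Dual d = lrev \<iota> (lstar \<iota> z)"
      using d unfolding dual_edges_avoiding_def by auto
    then obtain e where "z = Prim e" "e \<in> D" using lam(1) by auto
    then show "Prim d \<in> set lam \<or> Prim (\<iota> d) \<in> set lam" using z by auto
  qed
  ultimately have "\<forall>d\<in>D. h d = 0" by (rule divergence_free_on_simple_path[OF lam])
  then have wg: "w (Dual d) = g (?\<phi> (\<iota> d)) - g (?\<phi> d)" if "d \<in> D" for d
    using that unfolding h_def by auto
  have "\<forall>d\<in>D. (\<Sum>d'\<in>{d'\<in>D. ?\<phi> d' = ?\<phi> d}. 1 / \<rho> (Prim d') * (g (?\<phi> (\<iota> d')) - g (?\<phi> d'))) = 0"
  proof
    fix d assume "d \<in> D"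
    have "(\<Sum>d'\<in>{d'\<in>D. ?\<phi> d' = ?\<phi> d}. 1 / \<rho> (Prim d') * (g (?\<phi> (\<iota> d')) - g (?\<phi> d')))
        = (\<Sum>d'\<in>{d'\<in>D. ?\<phi> d' = ?\<phi> d}. w (Dual d') / \<rho> (Prim d'))"
      by (rule sum.cong) (auto simp: wg)
    then show "(\<Sum>d'\<in>{d'\<in>D. ?\<phi> d' = ?\<phi> d}. 1 / \<rho> (Prim d') * (g (?\<phi> (\<iota> d')) - g (?\<phi> d'))) = 0"
      using harmonic \<open>d \<in> D\<close> by simp
  qed
  then have "\<forall>d\<in>D. g (?\<phi> (\<iota> d)) = g (?\<phi> d)"
    by (rule harmonic_edge_constant[OF finite_darts involution_darts rho_dual_weights])
  then show ?thesis using wg by simp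
qed

lemma holomorphic_primal_sums:
  assumes "meromorphic D \<sigma> \<iota> \<rho> {} \<alpha>" "d \<in> D"
  shows "(\<Sum>d'\<in>{d'\<in>D. orb \<sigma> d' = orb \<sigma> d}. complex_of_real (\<rho> (Prim d')) * \<alpha> (Prim d')) = 0"
    and "(\<Sum>d'\<in>{d'\<in>D. orb (\<sigma> \<circ> \<iota>) d' = orb (\<sigma> \<circ> \<iota>) d}. \<alpha> (Prim d')) = 0"
proof -
  have forms: "one_form D \<iota> \<alpha>" "type10 D \<iota> \<rho> \<alpha>" and closed: "\<forall>u\<in>lverts D \<sigma> \<iota>. face_int D \<sigma> \<iota> \<alpha> u = 0"
    using assms(1) unfolding meromorphic_def by auto
  have \<alpha>: "\<alpha> = type10_ext D \<rho> (\<lambda>d. \<alpha> (Prim d))" by (rule type10_ext_eq[OF forms])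
  have "Inl (orb \<sigma> d) \<in> lverts D \<sigma> \<iota>" "Inr (orb (\<sigma> \<circ> \<iota>) d) \<in> lverts D \<sigma> \<iota>"
    using assms(2) unfolding lverts_iff by auto
  then have "face_int D \<sigma> \<iota> \<alpha> (Inl (orb \<sigma> d)) = 0" "face_int D \<sigma> \<iota> \<alpha> (Inr (orb (\<sigma> \<circ> \<iota>) d)) = 0"
    using closed by auto
  then show "(\<Sum>d'\<in>{d'\<in>D. orb \<sigma> d' = orb \<sigma> d}. complex_of_real (\<rho> (Prim d')) * \<alpha> (Prim d')) = 0"
    and "(\<Sum>d'\<in>{d'\<in>D. orb (\<sigma> \<circ> \<iota>) d' = orb (\<sigma> \<circ> \<iota>) d}. \<alpha> (Prim d')) = 0"
    unfolding face_int_type10_ext_Inl[where a = "\<lambda>d. \<alpha> (Prim d)", folded \<alpha>]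
      face_int_type10_ext_Inr[where a = "\<lambda>d. \<alpha> (Prim d)", folded \<alpha>]
    using one_form_prim_anti[OF forms(1)] by (auto simp: sum_negf)
qed

lemma Re_dual_type10:
  assumes "one_form D \<iota> \<alpha>" "type10 D \<iota> \<rho> \<alpha>" "d \<in> D"
  shows "Re (\<alpha> (Dual d)) = - \<rho> (Prim d) * Im (\<alpha> (Prim d))"
proof -
  have "\<alpha> (Dual d) = \<i> * of_real (\<rho> (Prim d)) * \<alpha> (Prim d)"
    using fun_cong[OF type10_ext_eq[OF assms(1,2)], of "Dual d"] assms(3) by simp
  then show ?thesis by simp
qed

lemma holomorphic_Re_sums:
  assumes holo: "meromorphic D \<sigma> \<iota> \<rho> {} \<alpha>"
  shows "\<forall>d\<in>D. (\<Sum>d'\<in>{d'\<in>D. orb \<sigma> d' = orb \<sigma> d}. \<rho> (Prim d') * Re (\<alpha> (Prim d'))) = 0"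
    and "\<forall>d\<in>D. (\<Sum>d'\<in>{d'\<in>D. orb \<sigma> d' = orb \<sigma> d}. Re (\<alpha> (Dual d'))) = 0"
    and "\<forall>d\<in>D. (\<Sum>d'\<in>{d'\<in>D. orb (\<sigma> \<circ> \<iota>) d' = orb (\<sigma> \<circ> \<iota>) d}. Re (\<alpha> (Dual d')) / \<rho> (Prim d')) = 0"
proof -
  have dual: "Re (\<alpha> (Dual d)) = - \<rho> (Prim d) * Im (\<alpha> (Prim d))" if "d \<in> D" for d
    using holo that Re_dual_type10 unfolding meromorphic_def by blast
  show "\<forall>d\<in>D. (\<Sum>d'\<in>{d'\<in>D. orb \<sigma> d' = orb \<sigma> d}. \<rho> (Prim d') * Re (\<alpha> (Prim d'))) = 0"
  proof
    fix d assume "d \<in> D"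
    show "(\<Sum>d'\<in>{d'\<in>D. orb \<sigma> d' = orb \<sigma> d}. \<rho> (Prim d') * Re (\<alpha> (Prim d'))) = 0"
      using arg_cong[where f = Re, OF holomorphic_primal_sums(1)[OF holo \<open>d \<in> D\<close>]] by simp
  qed
  show "\<forall>d\<in>D. (\<Sum>d'\<in>{d'\<in>D. orb \<sigma> d' = orb \<sigma> d}. Re (\<alpha> (Dual d'))) = 0"
  proof
    fix d assume "d \<in> D"
    have "(\<Sum>d'\<in>{d'\<in>D. orb \<sigma> d' = orb \<sigma> d}. Re (\<alpha> (Dual d')))
        = - Im (\<Sum>d'\<in>{d'\<in>D. orb \<sigma> d' = orb \<sigma> d}. complex_of_real (\<rho> (Prim d')) * \<alpha> (Prim d'))"
      using dual by (simp add: sum_negf)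
    then show "(\<Sum>d'\<in>{d'\<in>D. orb \<sigma> d' = orb \<sigma> d}. Re (\<alpha> (Dual d'))) = 0"
      using holomorphic_primal_sums(1)[OF holo \<open>d \<in> D\<close>] by simp
  qed
  show "\<forall>d\<in>D. (\<Sum>d'\<in>{d'\<in>D. orb (\<sigma> \<circ> \<iota>) d' = orb (\<sigma> \<circ> \<iota>) d}. Re (\<alpha> (Dual d')) / \<rho> (Prim d')) = 0"
  proof
    fix d assume "d \<in> D"
    have "(\<Sum>d'\<in>{d'\<in>D. orb (\<sigma> \<circ> \<iota>) d' = orb (\<sigma> \<circ> \<iota>) d}. Re (\<alpha> (Dual d')) / \<rho> (Prim d'))
        = - Im (\<Sum>d'\<in>{d'\<in>D. orb (\<sigma> \<circ> \<iota>) d' = orb (\<sigma> \<circ> \<iota>) d}. \<alpha> (Prim d'))"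
      using dual rho_pos by (simp add: sum_negf) (rule sum.cong; force)
    then show "(\<Sum>d'\<in>{d'\<in>D. orb (\<sigma> \<circ> \<iota>) d' = orb (\<sigma> \<circ> \<iota>) d}. Re (\<alpha> (Dual d')) / \<rho> (Prim d')) = 0"
      using holomorphic_primal_sums(2)[OF holo \<open>d \<in> D\<close>] by simp
  qed
qed

text \<open>The real part on primal edges and, through the type (1,0) condition, the imaginary part on
dual edges are closed and co-closed cocycles exact off lam*; both vanish.\<close>

lemma holomorphic_Re_periods_zero:
  assumes holo: "meromorphic D \<sigma> \<iota> \<rho> {} \<alpha>"
    and lam: "simple_path D \<sigma> \<iota> lam (Inl v0) x'"
    and periods: "\<forall>\<gamma>. is_loop D \<sigma> \<iota> \<gamma> \<and> avoids_dual \<iota> \<gamma> lam \<longrightarrow> Re (holonomy \<alpha> \<gamma>) = 0"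
  shows "\<alpha> = (\<lambda>_. 0)"
proof -
  have forms: "one_form D \<iota> \<alpha>" "type10 D \<iota> \<rho> \<alpha>" using holo unfolding meromorphic_def by auto
  have anti: "\<forall>d\<in>D. \<alpha> (Prim (\<iota> d)) = - \<alpha> (Prim d)" by (rule one_form_prim_anti[OF forms(1)])
  have lam_prim: "set lam \<subseteq> Prim ` D" using simple_path_primal[OF lam] by blast
  have lam_path: "is_chain \<sigma> \<iota> lam" "distinct (map (ltail \<sigma> \<iota>) lam @ [x'])"
      "lam \<noteq> [] \<longrightarrow> lhead \<sigma> \<iota> (last lam) = x'"
    using lam unfolding simple_path_def is_path_def by auto
  have loops: "\<forall>\<gamma>. is_loop D \<sigma> \<iota> \<gamma> \<and> avoids_dual \<iota> \<gamma> lam \<longrightarrow> sum_list (map (\<lambda>e. Re (\<alpha> e)) \<gamma>) = 0"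
    using periods unfolding Re_holonomy by blast
  have "\<forall>d\<in>D. Re (\<alpha> (Prim d)) = 0"
  proof (rule primal_harmonic_exact_zero[OF _ _ holomorphic_Re_sums(1)[OF holo]])
    show "\<forall>\<gamma>. is_loop D \<sigma> \<iota> \<gamma> \<and> set \<gamma> \<subseteq> Prim ` D \<longrightarrow> sum_list (map (\<lambda>e. Re (\<alpha> e)) \<gamma>) = 0"
      using loops lam_prim unfolding avoids_dual_def by fastforce
  qed (use anti in simp)
  moreover have "\<forall>d\<in>D. Re (\<alpha> (Dual d)) = 0"
    using loops holomorphic_Re_sums(2,3)[OF holo] anti rho_iota iota_in Re_dual_type10[OF forms]
    by (intro dual_harmonic_exact_off_path_zero[OF lam_prim lam_path]) auto
  ultimately have "\<forall>d\<in>D. \<alpha> (Prim d) = 0"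
    using Re_dual_type10[OF forms] rho_pos by (simp add: complex_eq_iff) (metis less_irrefl)
  then show ?thesis by (subst type10_ext_eq[OF forms]) (auto intro: type10_ext_zero)
qed

text \<open>For the imaginary normalization apply the previous lemma to i times the difference.\<close>

lemma normalized_third_kind_unique:
  assumes \<alpha>1: "normalized_third_kind D \<sigma> \<iota> \<rho> (Inl v0) x' part lam \<alpha>1"
    and \<alpha>2: "normalized_third_kind D \<sigma> \<iota> \<rho> (Inl v0) x' part lam \<alpha>2"
    and part: "part = Re \<or> part = Im"
    and lam: "simple_path D \<sigma> \<iota> lam (Inl v0) x'"
  shows "\<alpha>1 = \<alpha>2"
proof -
  let ?\<delta> = "\<lambda>e. \<alpha>1 e - \<alpha>2 e"
  have holo: "meromorphic D \<sigma> \<iota> \<rho> {} ?\<delta>"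
    using \<alpha>1 \<alpha>2 unfolding normalized_third_kind_def
    by (intro meromorphic_diff) (auto simp: face_int_residue)
  have periods: "part (holonomy ?\<delta> \<gamma>) = 0" if "is_loop D \<sigma> \<iota> \<gamma>" "avoids_dual \<iota> \<gamma> lam" for \<gamma>
    using \<alpha>1 \<alpha>2 that part unfolding normalized_third_kind_def holonomy_diff by auto
  have "?\<delta> = (\<lambda>_. 0)"
  proof (cases "part = Re")
    case True
    then show ?thesis using holomorphic_Re_periods_zero[OF holo lam] periods by blast
  next
    case False
    then have "Re (holonomy (\<lambda>e. \<i> * ?\<delta> e) \<gamma>) = 0"
      if "is_loop D \<sigma> \<iota> \<gamma>" "avoids_dual \<iota> \<gamma> lam" for \<gamma>
      using periods[OF that] part unfolding holonomy_mult by simp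
    then have "(\<lambda>e. \<i> * ?\<delta> e) = (\<lambda>_. 0)"
      using holomorphic_Re_periods_zero[OF meromorphic_mult[OF holo] lam] by blast
    then show ?thesis by (simp add: fun_eq_iff)
  qed
  then show ?thesis by (simp add: fun_eq_iff)
qed

lemma ex1_normalized_third_kind_primal:
  assumes x: "Inl v0 \<in> lverts D \<sigma> \<iota>" "x' \<in> lverts D \<sigma> \<iota>" "Inl v0 \<noteq> x'"
    and lam: "simple_path D \<sigma> \<iota> lam (Inl v0) x'"
    and part: "part = Re \<or> part = Im"
  shows "\<exists>!\<alpha>. normalized_third_kind D \<sigma> \<iota> \<rho> (Inl v0) x' part lam \<alpha>"
proof -
  obtain v1 where v1: "x' = Inl v1" using simple_path_primal[OF lam] by blast
  have v: "v0 \<in> orb \<sigma> ` D" "v1 \<in> orb \<sigma> ` D" "v0 \<noteq> v1"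
    using x unfolding v1 lverts_iff by auto
  have "\<exists>\<alpha>. normalized_third_kind D \<sigma> \<iota> \<rho> (Inl v0) x' part lam \<alpha>"
    using part ex_normalized_Re[OF v] ex_normalized_Im[OF v lam[unfolded v1]] v1 by auto
  then show ?thesis using normalized_third_kind_unique[OF _ _ part lam] by blast
qed

end

section \<open>Duality\<close>

fun swap_layer :: "'a + 'a \<Rightarrow> 'a + 'a" where
  "swap_layer (Inl a) = Inr a"
| "swap_layer (Inr a) = Inl a"

lemma swap_layer_swap_layer [simp]: "swap_layer (swap_layer u) = u"
  by (cases u) auto

lemma swap_layer_eq_iff [simp]: "swap_layer u = swap_layer v \<longleftrightarrow> u = v"
  by (metis swap_layer_swap_layer)

fun swap_dart :: "'d ldart \<Rightarrow> 'd ldart" where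
  "swap_dart (Prim d) = Dual d"
| "swap_dart (Dual d) = Prim d"

lemma swap_dart_swap_dart [simp]: "swap_dart (swap_dart x) = x"
  by (cases x) auto

lemma swap_dart_eq_iff [simp]: "swap_dart x = swap_dart y \<longleftrightarrow> x = y"
  by (metis swap_dart_swap_dart)

lemma swap_dart_in_ldarts [simp]: "swap_dart x \<in> ldarts D \<longleftrightarrow> x \<in> ldarts D"
  by (cases x) auto

lemma lrev_swap_dart: "lrev \<iota> (swap_dart x) = swap_dart (lrev \<iota> x)"
  by (cases x) auto

text \<open>Gamma and Gamma* exchange roles in the dual map (D, sigma o iota, iota), whose orientation is
reversed; so a (1,0)-form on Lambda corresponds to the conjugate of a (1,0)-form on the dual.\<close>

definition dual_form :: "('d ldart \<Rightarrow> complex) \<Rightarrow> 'd ldart \<Rightarrow> complex" where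
  "dual_form \<alpha> x = cnj (\<alpha> (swap_dart x))"

lemma dual_form_dual_form [simp]: "dual_form (dual_form \<alpha>) = \<alpha>"
  unfolding dual_form_def by simp

lemma holonomy_dual_form: "holonomy (dual_form \<alpha>) (map swap_dart \<gamma>) = cnj (holonomy \<alpha> \<gamma>)"
  unfolding holonomy_def dual_form_def by (induction \<gamma>) auto

context combinatorial_map
begin

lemma lstar_in: "x \<in> ldarts D \<Longrightarrow> lstar \<iota> x \<in> ldarts D"
  by (cases x) (auto simp: iota_in)

lemma swap_dart_lstar: "x \<in> ldarts D \<Longrightarrow> swap_dart (lstar \<iota> x) = lrev \<iota> (lstar \<iota> (swap_dart x))"
  by (cases x) auto

lemma combinatorial_map_dual: "combinatorial_map D (\<sigma> \<circ> \<iota>) \<iota>"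
proof
  let ?R = "{(a, b). b = (\<sigma> \<circ> \<iota>) a \<or> b = \<iota> a}"
  have "(d, d') \<in> ?R\<^sup>*" if "d \<in> D" "d' \<in> D" for d d'
  proof -
    have "(d, d') \<in> {(a, b). b = \<sigma> a \<or> b = \<iota> a}\<^sup>*" using that by (rule darts_connected)
    then have "(d, d') \<in> ?R\<^sup>* \<and> d' \<in> D"
    proof (induction rule: rtrancl_induct)
      case (step y z)
      then have y: "(d, y) \<in> ?R\<^sup>*" "y \<in> D" by auto
      from step(2) consider "z = \<sigma> y" | "z = \<iota> y" by blast
      then have "(y, z) \<in> ?R\<^sup>* \<and> z \<in> D"
      proof cases
        case 1
        then have "(y, \<iota> y) \<in> ?R" "(\<iota> y, z) \<in> ?R" using y(2) by simp_all
        then have "(y, z) \<in> ?R\<^sup>*" by (rule rtrancl_into_rtrancl[OF r_into_rtrancl])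
        then show ?thesis using 1 y(2) sigma_in by simp
      next
        case 2
        have "(y, z) \<in> ?R" using 2 by simp
        then have "(y, z) \<in> ?R\<^sup>*" by (rule r_into_rtrancl)
        moreover have "z \<in> D" using 2 y(2) iota_in by simp
        ultimately show ?thesis ..
      qed
      then have "(y, z) \<in> ?R\<^sup>*" "z \<in> D" by auto
      then show ?case using rtrancl_trans[OF y(1)] by simp
    qed (use that in simp)
    then show ?thesis by (rule conjunct1)
  qed
  then show "comb_map D (\<sigma> \<circ> \<iota>) \<iota>"
    unfolding comb_map_def using finite_darts darts_nonempty bij_sigma_iota bij_iota iota_neq
    by (intro conjI ballI) simp_all
qed

lemma orb_dual_face: "d \<in> D \<Longrightarrow> orb (\<sigma> \<circ> \<iota> \<circ> \<iota>) d = orb \<sigma> d"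
  by (rule orb_cong_on) (auto simp: sigma_in)

lemma ltail_dual: "x \<in> ldarts D \<Longrightarrow> ltail (\<sigma> \<circ> \<iota>) \<iota> x = swap_layer (ltail \<sigma> \<iota> (swap_dart x))"
  by (cases x) (auto simp: orb_dual_face)

lemma lhead_dual: "x \<in> ldarts D \<Longrightarrow> lhead (\<sigma> \<circ> \<iota>) \<iota> x = swap_layer (lhead \<sigma> \<iota> (swap_dart x))"
  unfolding lhead_def by (metis lrev_in lrev_swap_dart ltail_dual)

lemma lverts_dual: "lverts D (\<sigma> \<circ> \<iota>) \<iota> = swap_layer ` lverts D \<sigma> \<iota>"
proof -
  have "(\<lambda>d. Inr (orb (\<sigma> \<circ> \<iota> \<circ> \<iota>) d)) ` D = (\<lambda>d. Inr (orb \<sigma> d)) ` D"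
    by (rule image_cong) (auto simp: orb_dual_face)
  then show ?thesis unfolding lverts_def by (auto simp: image_Un image_image)
qed

lemma is_chain_dual:
  "set xs \<subseteq> ldarts D \<Longrightarrow> is_chain (\<sigma> \<circ> \<iota>) \<iota> (map swap_dart xs) \<longleftrightarrow> is_chain \<sigma> \<iota> xs"
proof (induction xs)
  case (Cons y ys)
  show ?case
  proof (cases ys)
    case (Cons z zs)
    have "y \<in> ldarts D" "z \<in> ldarts D" "set ys \<subseteq> ldarts D" using Cons.prems \<open>ys = z # zs\<close> by auto
    then have "lhead (\<sigma> \<circ> \<iota>) \<iota> (swap_dart y) = swap_layer (lhead \<sigma> \<iota> y)"
      "ltail (\<sigma> \<circ> \<iota>) \<iota> (swap_dart z) = swap_layer (ltail \<sigma> \<iota> z)"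
      using lhead_dual[of "swap_dart y"] ltail_dual[of "swap_dart z"] by simp_all
    then show ?thesis using Cons.IH[OF \<open>set ys \<subseteq> ldarts D\<close>] \<open>ys = z # zs\<close>
      by (simp only: list.map is_chain.simps swap_layer_eq_iff)
  qed simp
qed simp

lemma is_path_dual:
  "is_path D (\<sigma> \<circ> \<iota>) \<iota> (map swap_dart xs) u v \<longleftrightarrow> is_path D \<sigma> \<iota> xs (swap_layer u) (swap_layer v)"
proof (cases "xs \<noteq> [] \<and> set xs \<subseteq> ldarts D")
  case True
  then have "hd xs \<in> ldarts D" "last xs \<in> ldarts D" by auto
  then have "ltail (\<sigma> \<circ> \<iota>) \<iota> (hd (map swap_dart xs)) = swap_layer (ltail \<sigma> \<iota> (hd xs))"
    "lhead (\<sigma> \<circ> \<iota>) \<iota> (last (map swap_dart xs)) = swap_layer (lhead \<sigma> \<iota> (last xs))"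
    using True ltail_dual[of "swap_dart (hd xs)"] lhead_dual[of "swap_dart (last xs)"]
    by (simp_all add: hd_map last_map)
  then show ?thesis using True is_chain_dual unfolding is_path_def by auto
qed (auto simp: is_path_def)

lemma is_loop_dual: "is_loop D (\<sigma> \<circ> \<iota>) \<iota> (map swap_dart xs) \<longleftrightarrow> is_loop D \<sigma> \<iota> xs"
  unfolding is_loop_def is_path_dual by (metis swap_layer_swap_layer)

lemma avoids_dual_swap_dart:
  assumes "set lam \<subseteq> ldarts D"
  shows "avoids_dual \<iota> (map swap_dart \<gamma>) (map swap_dart lam) \<longleftrightarrow> avoids_dual \<iota> \<gamma> lam"
proof -
  have "lstar \<iota> (swap_dart z) = swap_dart (lrev \<iota> (lstar \<iota> z))"
    "lrev \<iota> (lstar \<iota> (swap_dart z)) = swap_dart (lstar \<iota> z)" if "z \<in> ldarts D" for z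
    using that by (cases z; simp)+
  then have "(swap_dart y \<noteq> lstar \<iota> (swap_dart z) \<and> swap_dart y \<noteq> lrev \<iota> (lstar \<iota> (swap_dart z)))
      \<longleftrightarrow> (y \<noteq> lstar \<iota> z \<and> y \<noteq> lrev \<iota> (lstar \<iota> z))" if "z \<in> set lam" for y z
    using that assms by auto
  then show ?thesis unfolding avoids_dual_def by simp
qed

lemma simple_path_dual:
  assumes "simple_path D \<sigma> \<iota> lam x x'"
  shows "simple_path D (\<sigma> \<circ> \<iota>) \<iota> (map swap_dart lam) (swap_layer x) (swap_layer x')"
proof -
  have "set lam \<subseteq> ldarts D" using assms unfolding simple_path_def is_path_def by auto
  then have tails: "map (ltail (\<sigma> \<circ> \<iota>) \<iota>) (map swap_dart lam) @ [swap_layer x']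
      = map swap_layer (map (ltail \<sigma> \<iota>) lam @ [x'])"
    using ltail_dual by (simp add: subset_iff)
  have "distinct (map swap_layer xs) \<longleftrightarrow> distinct xs" for xs :: "('d set + 'd set) list"
    by (simp add: distinct_map inj_on_def)
  then have "distinct (map (ltail (\<sigma> \<circ> \<iota>) \<iota>) (map swap_dart lam) @ [swap_layer x'])"
    using assms unfolding tails simple_path_def by blast
  moreover have "is_path D (\<sigma> \<circ> \<iota>) \<iota> (map swap_dart lam) (swap_layer x) (swap_layer x')"
    using assms unfolding is_path_dual simple_path_def by simp
  ultimately show ?thesis unfolding simple_path_def by blast
qed

lemma face_int_dual:
  assumes "one_form D \<iota> \<alpha>"
  shows "face_int D (\<sigma> \<circ> \<iota>) \<iota> (dual_form \<alpha>) u = - cnj (face_int D \<sigma> \<iota> \<alpha> (swap_layer u))"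
proof -
  let ?S = "{y \<in> ldarts D. ltail \<sigma> \<iota> y = swap_layer u}"
  have "{x \<in> ldarts D. ltail (\<sigma> \<circ> \<iota>) \<iota> x = u} = swap_dart ` ?S"
    by (auto simp: ltail_dual image_iff) (metis swap_dart_in_ldarts swap_dart_swap_dart)
  then have "face_int D (\<sigma> \<circ> \<iota>) \<iota> (dual_form \<alpha>) u = (\<Sum>y\<in>?S. dual_form \<alpha> (lstar \<iota> (swap_dart y)))"
    unfolding face_int_def by (simp add: sum.reindex inj_on_def)
  also have "\<dots> = (\<Sum>y\<in>?S. - cnj (\<alpha> (lstar \<iota> y)))"
  proof (rule sum.cong)
    fix y assume "y \<in> ?S"
    then have "swap_dart (lstar \<iota> (swap_dart y)) = lrev \<iota> (lstar \<iota> y)" "lstar \<iota> y \<in> ldarts D"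
      using swap_dart_lstar[of "swap_dart y"] lstar_in by auto
    then show "dual_form \<alpha> (lstar \<iota> (swap_dart y)) = - cnj (\<alpha> (lstar \<iota> y))"
      using assms unfolding dual_form_def one_form_def by simp
  qed simp
  finally show ?thesis unfolding face_int_def by (simp add: sum_negf)
qed

lemma residue_dual:
  "one_form D \<iota> \<alpha> \<Longrightarrow> residue D (\<sigma> \<circ> \<iota>) \<iota> (dual_form \<alpha>) u = cnj (residue D \<sigma> \<iota> \<alpha> (swap_layer u))"
  unfolding residue_def by (simp add: face_int_dual field_simps)

end

lemma one_form_dual_form: "one_form D \<iota> \<alpha> \<Longrightarrow> one_form D \<iota> (dual_form \<alpha>)"
  unfolding one_form_def dual_form_def by (simp add: lrev_swap_dart[symmetric])

lemma type10_dual_form: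
  assumes "combinatorial_map D \<sigma> \<iota>" "conf_struct D \<iota> \<rho>" "one_form D \<iota> \<alpha>" "type10 D \<iota> \<rho> \<alpha>"
  shows "type10 D \<iota> (\<rho> \<circ> swap_dart) (dual_form \<alpha>)"
  unfolding type10_def
proof
  interpret combinatorial_map D \<sigma> \<iota> by fact
  fix x assume x: "x \<in> ldarts D"
  let ?y = "lstar \<iota> (swap_dart x)"
  have y: "?y \<in> ldarts D" using x by (simp add: lstar_in)
  have "hodge \<iota> (\<rho> \<circ> swap_dart) (dual_form \<alpha>) x = - complex_of_real (\<rho> (lrev \<iota> ?y)) * cnj (\<alpha> (lrev \<iota> ?y))"
    unfolding hodge_def dual_form_def using swap_dart_lstar[OF x] by simp
  also have "\<dots> = cnj (complex_of_real (\<rho> ?y) * \<alpha> ?y)"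
    using assms(2,3) y unfolding conf_struct_def one_form_def by simp
  also have "complex_of_real (\<rho> ?y) * \<alpha> ?y = \<i> * \<alpha> (swap_dart x)"
    using assms(4) x unfolding type10_def hodge_def
    by (metis minus_mult_left neg_equal_iff_equal swap_dart_in_ldarts)
  finally show "hodge \<iota> (\<rho> \<circ> swap_dart) (dual_form \<alpha>) x = - \<i> * dual_form \<alpha> x"
    by (simp add: dual_form_def[abs_def] comp_def)
qed

context conformal_map
begin

lemma conf_struct_dual: "conf_struct D \<iota> (\<rho> \<circ> swap_dart)"
  unfolding conf_struct_def
proof (intro ballI conjI)
  fix x assume x: "x \<in> ldarts D"
  then have "swap_dart x \<in> ldarts D" "lstar \<iota> (swap_dart x) \<in> ldarts D" by (simp_all add: lstar_in)
  then show "(\<rho> \<circ> swap_dart) x > 0" "(\<rho> \<circ> swap_dart) (lrev \<iota> x) = (\<rho> \<circ> swap_dart) x"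
    "(\<rho> \<circ> swap_dart) x * (\<rho> \<circ> swap_dart) (lstar \<iota> x) = 1"
    using conf_struct swap_dart_lstar[OF x] unfolding conf_struct_def by (auto simp flip: lrev_swap_dart)
qed

lemma dual_conformal_map: "conformal_map D (\<sigma> \<circ> \<iota>) \<iota> (\<rho> \<circ> swap_dart)"
  using combinatorial_map_dual conf_struct_dual by (simp add: conformal_map_def conformal_map_axioms_def)

lemma meromorphic_dual:
  "meromorphic D (\<sigma> \<circ> \<iota>) \<iota> (\<rho> \<circ> swap_dart) (swap_layer ` P) (dual_form \<alpha>) \<longleftrightarrow> meromorphic D \<sigma> \<iota> \<rho> P \<alpha>"
    (is "?dual \<longleftrightarrow> ?primal")
proof -
  have one_form: "one_form D \<iota> (dual_form \<alpha>) \<longleftrightarrow> one_form D \<iota> \<alpha>"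
    using one_form_dual_form[of D \<iota> "dual_form \<alpha>"] one_form_dual_form[of D \<iota> \<alpha>] by auto
  have type10: "type10 D \<iota> (\<rho> \<circ> swap_dart) (dual_form \<alpha>) \<longleftrightarrow> type10 D \<iota> \<rho> \<alpha>" if "one_form D \<iota> \<alpha>"
    using type10_dual_form[OF combinatorial_map_axioms conf_struct that]
      type10_dual_form[OF combinatorial_map_axioms conf_struct_dual one_form_dual_form[OF that]]
    by (auto simp: comp_def)
  have faces: "face_int D (\<sigma> \<circ> \<iota>) \<iota> (dual_form \<alpha>) (swap_layer w) = 0 \<longleftrightarrow> face_int D \<sigma> \<iota> \<alpha> w = 0"
    if "one_form D \<iota> \<alpha>" for w
    using face_int_dual[OF that, of "swap_layer w"] by simp
  have verts: "swap_layer w \<in> lverts D (\<sigma> \<circ> \<iota>) \<iota> \<longleftrightarrow> w \<in> lverts D \<sigma> \<iota>" for w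
    unfolding lverts_dual by (metis image_eqI swap_layer_swap_layer imageE)
  have poles: "swap_layer w \<in> swap_layer ` P \<longleftrightarrow> w \<in> P" for w
    by (metis image_eqI swap_layer_swap_layer imageE)
  have all_swap: "(\<forall>u\<in>A. Q u) \<longleftrightarrow> (\<forall>w. swap_layer w \<in> A \<longrightarrow> Q (swap_layer w))" for A Q
    by (metis swap_layer_swap_layer)
  show ?thesis
  proof
    assume ?dual
    then have "one_form D \<iota> \<alpha>" using one_form unfolding meromorphic_def by blast
    then show ?primal using \<open>?dual\<close> one_form type10 faces verts poles
      unfolding meromorphic_def all_swap[of "lverts D (\<sigma> \<circ> \<iota>) \<iota> - _"] all_swap[of "swap_layer ` P"]
      by auto
  next
    assume ?primal
    then have "one_form D \<iota> \<alpha>" unfolding meromorphic_def by blast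
    then show ?dual using \<open>?primal\<close> one_form type10 faces verts poles
      unfolding meromorphic_def all_swap[of "lverts D (\<sigma> \<circ> \<iota>) \<iota> - _"] all_swap[of "swap_layer ` P"]
      by auto
  qed
qed

lemma normalized_third_kind_dual:
  assumes lam: "set lam \<subseteq> ldarts D" and part: "part = Re \<or> part = Im"
  shows "normalized_third_kind D (\<sigma> \<circ> \<iota>) \<iota> (\<rho> \<circ> swap_dart) (swap_layer x) (swap_layer x') part
      (map swap_dart lam) (dual_form \<alpha>) \<longleftrightarrow> normalized_third_kind D \<sigma> \<iota> \<rho> x x' part lam \<alpha>"
proof -
  have mero: "meromorphic D (\<sigma> \<circ> \<iota>) \<iota> (\<rho> \<circ> swap_dart) {swap_layer x, swap_layer x'} (dual_form \<alpha>)
      \<longleftrightarrow> meromorphic D \<sigma> \<iota> \<rho> {x, x'} \<alpha>"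
    using meromorphic_dual[of "{x, x'}"] by simp
  have res: "residue D (\<sigma> \<circ> \<iota>) \<iota> (dual_form \<alpha>) (swap_layer u) = r \<longleftrightarrow> residue D \<sigma> \<iota> \<alpha> u = r"
    if "meromorphic D \<sigma> \<iota> \<rho> {x, x'} \<alpha>" "r \<in> {1, -1}" for u r
    using that residue_dual[of \<alpha> "swap_layer u"] unfolding meromorphic_def by (auto simp: complex_eq_iff)
  have part_cnj: "part (cnj z) = 0 \<longleftrightarrow> part z = 0" for z
    using part by auto
  have "map swap_dart (map swap_dart \<gamma>) = \<gamma>" for \<gamma> :: "'d ldart list"
    by (simp add: map_idI)
  then have all_map: "(\<forall>\<gamma>. P \<gamma>) \<longleftrightarrow> (\<forall>\<gamma>. P (map swap_dart \<gamma>))" for P :: "'d ldart list \<Rightarrow> bool"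
    by metis
  have "(\<forall>\<gamma>. is_loop D (\<sigma> \<circ> \<iota>) \<iota> \<gamma> \<and> avoids_dual \<iota> \<gamma> (map swap_dart lam) \<longrightarrow>
        part (holonomy (dual_form \<alpha>) \<gamma>) = 0)
      \<longleftrightarrow> (\<forall>\<gamma>. is_loop D \<sigma> \<iota> \<gamma> \<and> avoids_dual \<iota> \<gamma> lam \<longrightarrow> part (holonomy \<alpha> \<gamma>) = 0)"
    by (subst all_map) (simp add: is_loop_dual avoids_dual_swap_dart[OF lam] holonomy_dual_form part_cnj)
  then show ?thesis
    unfolding normalized_third_kind_def using mero res by auto
qed

end

lemma ex1_involution_transfer:
  assumes "\<exists>!b. Q b" "\<And>a. Q (f a) \<longleftrightarrow> P a" "\<And>a. f (f a) = a"
  shows "\<exists>!a. P a"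
proof -
  obtain b where b: "Q b" "\<And>b'. Q b' \<Longrightarrow> b' = b" using assms(1) by (elim ex1E) blast
  show ?thesis
  proof (rule ex1I)
    show "P (f b)" using assms(2)[of "f b"] assms(3)[of b] b(1) by simp
  next
    fix a assume "P a"
    then have "f a = b" using assms(2) b(2) by blast
    then show "a = f b" using assms(3)[of a] by simp
  qed
qed

lemma ex1_pair:
  assumes "\<exists>!a. P a" "\<exists>!b. Q b"
  shows "\<exists>!ab. case ab of (a, b) \<Rightarrow> P a \<and> Q b"
proof -
  obtain a where a: "P a" "\<And>a'. P a' \<Longrightarrow> a' = a" using assms(1) by (elim ex1E) blast
  obtain b where b: "Q b" "\<And>b'. Q b' \<Longrightarrow> b' = b" using assms(2) by (elim ex1E) blast
  show ?thesis
  proof (rule ex1I[of _ "(a, b)"])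
    fix ab assume "case ab of (a, b) \<Rightarrow> P a \<and> Q b"
    then show "ab = (a, b)" using a(2) b(2) by (cases ab) simp
  qed (simp add: a(1) b(1))
qed

context conformal_map
begin

lemma ex1_normalized_third_kind:
  assumes x: "x \<in> lverts D \<sigma> \<iota>" "x' \<in> lverts D \<sigma> \<iota>" "x \<noteq> x'"
    and lam: "simple_path D \<sigma> \<iota> lam x x'" and part: "part = Re \<or> part = Im"
  shows "\<exists>!\<alpha>. normalized_third_kind D \<sigma> \<iota> \<rho> x x' part lam \<alpha>"
proof (cases x)
  case (Inl v0)
  then show ?thesis using ex1_normalized_third_kind_primal x lam part by blast
next
  case (Inr F)
  interpret dual: conformal_map D "\<sigma> \<circ> \<iota>" \<iota> "\<rho> \<circ> swap_dart" by (rule dual_conformal_map)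
  have sx: "swap_layer x = Inl F" using Inr by simp
  have dual_ex1: "\<exists>!\<beta>. normalized_third_kind D (\<sigma> \<circ> \<iota>) \<iota> (\<rho> \<circ> swap_dart) (swap_layer x) (swap_layer x')
      part (map swap_dart lam) \<beta>"
    unfolding sx
  proof (rule dual.ex1_normalized_third_kind_primal[OF _ _ _ _ part])
    show "Inl F \<in> lverts D (\<sigma> \<circ> \<iota>) \<iota>" "swap_layer x' \<in> lverts D (\<sigma> \<circ> \<iota>) \<iota>"
      using x sx unfolding lverts_dual by (metis image_eqI)+
    show "Inl F \<noteq> swap_layer x'" using x(3) sx by (metis swap_layer_swap_layer)
    show "simple_path D (\<sigma> \<circ> \<iota>) \<iota> (map swap_dart lam) (Inl F) (swap_layer x')"
      using simple_path_dual[OF lam] sx by simp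
  qed
  have "set lam \<subseteq> ldarts D" using lam unfolding simple_path_def is_path_def by auto
  then show ?thesis
    using ex1_involution_transfer[where f = dual_form, OF dual_ex1] normalized_third_kind_dual[OF _ part]
    by simp
qed

end

theorem mainTheorem9:
  fixes D :: "'d set" and \<sigma> \<iota> :: "'d \<Rightarrow> 'd" and \<rho> :: "'d ldart \<Rightarrow> real"
    and x x' :: "'d set + 'd set" and lam :: "'d ldart list"
  assumes "comb_map D \<sigma> \<iota>"
    and "conf_struct D \<iota> \<rho>"
    and "x \<in> lverts D \<sigma> \<iota>" and "x' \<in> lverts D \<sigma> \<iota>" and "x \<noteq> x'"
    and "simple_path D \<sigma> \<iota> lam x x'"
  shows "\<exists>!ab. case ab of (\<alpha>, \<beta>) \<Rightarrow>
           meromorphic D \<sigma> \<iota> \<rho> {x, x'} \<alpha> \<and>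
           residue D \<sigma> \<iota> \<alpha> x = 1 \<and> residue D \<sigma> \<iota> \<alpha> x' = -1 \<and>
           meromorphic D \<sigma> \<iota> \<rho> {x, x'} \<beta> \<and>
           residue D \<sigma> \<iota> \<beta> x = 1 \<and> residue D \<sigma> \<iota> \<beta> x' = -1 \<and>
           (\<forall>\<gamma>. is_loop D \<sigma> \<iota> \<gamma> \<and> avoids_dual \<iota> \<gamma> lam \<longrightarrow>
              Re (holonomy \<alpha> \<gamma>) = 0 \<and> Im (holonomy \<beta> \<gamma>) = 0)"
proof -
  interpret conformal_map D \<sigma> \<iota> \<rho>
    using assms(1,2) by (simp add: conformal_map_def conformal_map_axioms_def combinatorial_map_def)
  have "\<exists>!ab. case ab of (\<alpha>, \<beta>) \<Rightarrow>
      normalized_third_kind D \<sigma> \<iota> \<rho> x x' Re lam \<alpha> \<and> normalized_third_kind D \<sigma> \<iota> \<rho> x x' Im lam \<beta>"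
    using ex1_normalized_third_kind[OF assms(3-6)] by (intro ex1_pair) auto
  moreover have "normalized_third_kind D \<sigma> \<iota> \<rho> x x' Re lam \<alpha> \<and> normalized_third_kind D \<sigma> \<iota> \<rho> x x' Im lam \<beta>
      \<longleftrightarrow> meromorphic D \<sigma> \<iota> \<rho> {x, x'} \<alpha> \<and>
           residue D \<sigma> \<iota> \<alpha> x = 1 \<and> residue D \<sigma> \<iota> \<alpha> x' = -1 \<and>
           meromorphic D \<sigma> \<iota> \<rho> {x, x'} \<beta> \<and>
           residue D \<sigma> \<iota> \<beta> x = 1 \<and> residue D \<sigma> \<iota> \<beta> x' = -1 \<and>
           (\<forall>\<gamma>. is_loop D \<sigma> \<iota> \<gamma> \<and> avoids_dual \<iota> \<gamma> lam \<longrightarrow>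
              Re (holonomy \<alpha> \<gamma>) = 0 \<and> Im (holonomy \<beta> \<gamma>) = 0)" for \<alpha> \<beta>
    unfolding normalized_third_kind_def by blast
  ultimately show ?thesis by simp
qed

end
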